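(* Let $\alpha\in(1,2)$ and let $p\ge2$ be an integer. There is a constant $C^R_{p,\alpha}$ depending only on $p$ and $\alpha$ such that for every $n\ge1$, $$\|n^{-\alpha}A_n^R\|_q\le C^R_{p,\alpha},\qquad q\in\{1,2,\infty\}.$$
   Context: Fix integers $p\ge2$, $n\ge1$. The uniform open knot sequence on $[0,1]$ is $\xi_1=\dots=\xi_{p+1}=0$, $\xi_{i+p+1}=i/n$ for $i=0,\dots,n$, $\xi_{p+n+1}=\dots=\xi_{2p+n+1}=1$. The B-splines are defined by $N^0_i=\mathbf 1_{[\xi_i,\xi_{i+1})}$ and $N^k_i(x)=\frac{x-\xi_i}{\xi_{i+k}-\xi_i}N^{k-1}_i(x)+\frac{\xi_{i+k+1}-x}{\xi_{i+k+1}-\xi_{i+1}}N^{k-1}_{i+1}(x)$ (fractions with zero denominator are zero); $N^p_i$, $i=1,\dots,n+p$, are the degree-$p$ B-splines. The Greville abscissae are $\eta_i=\frac{\xi_{i+1}+\dots+\xi_{i+p}}{p}$, $i=2,\dots,n+p-1$. For $\alpha\in(1,2)$ the right Riemann–Liouville derivative on $[0,1]$ is $D^\alpha_{x,1}u(x)=\frac{1}{\Gamma(2-\alpha)}\frac{d^2}{dx^2}\int_x^1(y-x)^{1-\alpha}u(y)\,dy$. $A_n^R$ is the $(n+p-2)\times(n+p-2)$ matrix with $(A_n^R)_{i,j}=D^\alpha_{x,1}N^p_{j+1}(\eta_{i+1})$. $\|\cdot\|_1$, $\|\cdot\|_\infty$ are the maximum absolute column sum and row sum norms, $\|\cdot\|_2$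 the spectral norm. *)

theory Defs
  imports "HOL-Analysis.Analysis"
begin

text \<open>Uniform open knot vector on [0,1], 1-indexed:
  xi_1 = ... = xi_{p+1} = 0, xi_{i+p+1} = i/n (i = 0..n), xi_{p+n+1} = ... = xi_{2p+n+1} = 1.\<close>
definition knot :: "nat \<Rightarrow> nat \<Rightarrow> nat \<Rightarrow> real" where
  "knot p n i = (if i \<le> p + 1 then 0
                 else if i \<le> p + n + 1 then real (i - (p + 1)) / real n
                 else 1)"

text \<open>B-splines N^k_i via Cox--de Boor recursion; division by zero yields 0 in Isabelle,
  matching the convention that fractions with zero denominator are zero.\<close>
fun bspline :: "nat \<Rightarrow> nat \<Rightarrow> nat \<Rightarrow> nat \<Rightarrow> real \<Rightarrow> real" where
  "bspline p n 0 i x = (if knot p n i \<le> x \<and> x < knot p n (i + 1) then 1 else 0)"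
| "bspline p n (Suc k) i x =
     (x - knot p n i) / (knot p n (i + Suc k) - knot p n i) * bspline p n k i x
   + (knot p n (i + Suc k + 1) - x) / (knot p n (i + Suc k + 1) - knot p n (i + 1))
       * bspline p n k (i + 1) x"

definition greville :: "nat \<Rightarrow> nat \<Rightarrow> nat \<Rightarrow> real" where
  "greville p n i = (\<Sum>k = i + 1..i + p. knot p n k) / real p"

definition rl_right_deriv :: "real \<Rightarrow> (real \<Rightarrow> real) \<Rightarrow> real \<Rightarrow> real" where
  "rl_right_deriv \<alpha> u x =
     (let g = (\<lambda>t. integral {t..1} (\<lambda>y. (y - t) powr (1 - \<alpha>) * u y))
      in deriv (deriv g) x / Gamma (2 - \<alpha>))"

text \<open>The matrix A_n^R, entries for 1 \<le> i, j \<le> n + p - 2.\<close>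
definition A_R :: "real \<Rightarrow> nat \<Rightarrow> nat \<Rightarrow> nat \<Rightarrow> nat \<Rightarrow> real" where
  "A_R \<alpha> p n i j = rl_right_deriv \<alpha> (bspline p n p (j + 1)) (greville p n (i + 1))"

definition mat_norm_1 :: "nat \<Rightarrow> (nat \<Rightarrow> nat \<Rightarrow> real) \<Rightarrow> real" where
  "mat_norm_1 m a = Max ((\<lambda>j. \<Sum>i = 1..m. \<bar>a i j\<bar>) ` {1..m})"

definition mat_norm_inf :: "nat \<Rightarrow> (nat \<Rightarrow> nat \<Rightarrow> real) \<Rightarrow> real" where
  "mat_norm_inf m a = Max ((\<lambda>i. \<Sum>j = 1..m. \<bar>a i j\<bar>) ` {1..m})"

definition mat_norm_2 :: "nat \<Rightarrow> (nat \<Rightarrow> nat \<Rightarrow> real) \<Rightarrow> real" where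
  "mat_norm_2 m a = Sup ((\<lambda>x. sqrt (\<Sum>i = 1..m. (\<Sum>j = 1..m. a i j * x j)\<^sup>2))
                         ` {x. (\<Sum>j = 1..m. (x j)\<^sup>2) = 1})"

end

(* On (0,1] each B-spline N^p_j is a finite combination of truncated powers: (xi_r - y)_+^p at
   its simple interior knots and (1 - y)_+^q, q <= p, at the end knot 1, with coefficients of size
   O(n^p) and O(n^q). The right Riemann-Liouville derivative maps (c - y)_+^m to a multiple of
   (c - x)_+^(m - alpha). Below the band j + p <= i the Greville point lies right of the support and
   the entry vanishes; in the band |i - j| <= p the Greville point is within 2p/n of the knots and at
   least 1/(np) away from 1, so every term of n^-alpha A_ij is bounded independently of n. Above the
   band the derivatives can be taken under the integral, giving the kernel (alpha-1) alpha
   (y - x)^(-alpha-1) and the decay n^-alpha |A_ij| <= C (j - i - p)^(-alpha-1), which is summable.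
   Thus all row and column sums are bounded uniformly in n, which bounds the 1- and infinity-norms
   and, by Schur's test, the spectral norm. *)

theory Submission
  imports Defs
begin

section \<open>Knots\<close>

lemma knot_eq_min: "1 \<le> n \<Longrightarrow> knot p n k = real (min n (k - Suc p)) / real n"
  unfolding knot_def by (auto simp: min_def)

lemma knot_mono: "1 \<le> n \<Longrightarrow> k \<le> l \<Longrightarrow> knot p n k \<le> knot p n l"
  by (simp add: knot_eq_min divide_right_mono)

lemma knot_nonneg: "0 \<le> knot p n k"
  unfolding knot_def by auto

lemma knot_le_1: "1 \<le> n \<Longrightarrow> knot p n k \<le> 1"
  by (simp add: knot_eq_min)

lemma knot_diff_ge:
  assumes "1 \<le> n" "knot p n k \<noteq> knot p n l"
  shows "1 / real n \<le> \<bar>knot p n k - knot p n l\<bar>"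
proof -
  define A where "A = min n (k - Suc p)"
  define B where "B = min n (l - Suc p)"
  have kA: "knot p n k = real A / n" and lB: "knot p n l = real B / n"
    using assms(1) by (simp_all add: knot_eq_min A_def B_def)
  have "A \<noteq> B" using assms(2) kA lB by auto
  hence "1 \<le> \<bar>real A - real B\<bar>" by linarith
  hence "1 / real n \<le> \<bar>real A - real B\<bar> / n" using assms(1)
    by (simp add: divide_right_mono)
  also have "\<bar>real A - real B\<bar> / n = \<bar>knot p n k - knot p n l\<bar>"
    using assms(1) by (simp add: kA lB diff_divide_distrib[symmetric])
  finally show ?thesis .
qed

lemma knot_diff_le:
  assumes "1 \<le> n" "k \<le> l"
  shows "knot p n l - knot p n k \<le> real (l - k) / real n"
proof -
  have "real (min n (l - Suc p)) - real (min n (k - Suc p)) \<le> real (l - k)"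
    using assms(2) by (simp add: min_def) linarith
  thus ?thesis using assms(1)
    by (simp add: knot_eq_min diff_divide_distrib[symmetric] divide_right_mono)
qed

lemma knot_times_n_ge:
  "1 \<le> n \<Longrightarrow> k \<le> p + n + 1 \<Longrightarrow> real k - real p - 1 \<le> knot p n k * n"
  by (simp add: knot_eq_min min_def) linarith

lemma knot_times_n_le:
  "1 \<le> n \<Longrightarrow> knot p n k * n \<le> real k - real p - 1 \<or> knot p n k * n = 0"
  by (simp add: knot_eq_min min_def) linarith

definition interior_knot :: "nat \<Rightarrow> nat \<Rightarrow> nat \<Rightarrow> bool" where
  "interior_knot p n r \<longleftrightarrow> 0 < knot p n r \<and> knot p n r < 1"

lemma interior_knot_simple:
  assumes "1 \<le> n" "interior_knot p n r" "knot p n l = knot p n r"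
  shows "l = r"
proof -
  have n0: "real n > 0" using assms(1) by simp
  have e: "min n (l - Suc p) = min n (r - Suc p)"
    using assms(3) n0 by (simp add: knot_eq_min)
  have "0 < min n (r - Suc p)" "min n (r - Suc p) < n"
    using assms(2) n0 by (auto simp: interior_knot_def knot_eq_min field_simps)
  thus ?thesis using e by (auto simp: min_def split: if_splits)
qed

section \<open>B-splines as combinations of truncated powers\<close>

definition trunc_pow :: "nat \<Rightarrow> real \<Rightarrow> real \<Rightarrow> real" where
  "trunc_pow m c y = (if y < c then (c - y) ^ m else 0)"

definition knot_prod :: "nat \<Rightarrow> nat \<Rightarrow> nat \<Rightarrow> nat \<Rightarrow> nat \<Rightarrow> real" where
  "knot_prod p n i j r = (\<Prod>l\<in>{i..j}-{r}. knot p n r - knot p n l)"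

lemma knot_prod_top:
  assumes "r \<noteq> Suc j" "i \<le> Suc j"
  shows "knot_prod p n i (Suc j) r = knot_prod p n i j r * (knot p n r - knot p n (Suc j))"
proof -
  have "{i..Suc j} - {r} = insert (Suc j) ({i..j} - {r})" using assms by auto
  thus ?thesis unfolding knot_prod_def by (simp add: mult.commute)
qed

lemma knot_prod_bot:
  assumes "r \<noteq> i" "i \<le> j"
  shows "knot_prod p n i j r = (knot p n r - knot p n i) * knot_prod p n (Suc i) j r"
proof -
  have "{i..j} - {r} = insert i ({Suc i..j} - {r})" using assms by auto
  thus ?thesis unfolding knot_prod_def by simp
qed

lemma knot_prod_nonzero:
  assumes "1 \<le> n" "interior_knot p n r"
  shows "knot_prod p n i j r \<noteq> 0"
  using interior_knot_simple[OF assms] unfolding knot_prod_def by auto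

definition left_weight :: "nat \<Rightarrow> nat \<Rightarrow> nat \<Rightarrow> nat \<Rightarrow> real \<Rightarrow> real" where
  "left_weight p n k i y = (y - knot p n i) / (knot p n (i+k+1) - knot p n i)"

definition right_weight :: "nat \<Rightarrow> nat \<Rightarrow> nat \<Rightarrow> nat \<Rightarrow> real \<Rightarrow> real" where
  "right_weight p n k i y = (knot p n (i+k+2) - y) / (knot p n (i+k+2) - knot p n (i+1))"

lemma bspline_Suc_weights:
  "bspline p n (Suc k) i y =
     left_weight p n k i y * bspline p n k i y + right_weight p n k i y * bspline p n k (Suc i) y"
  by (simp add: left_weight_def right_weight_def numeral_2_eq_2)

text \<open>The coefficient of the truncated power at an interior knot \<open>\<xi>\<^sub>r\<close> is the divided difference
  weight of \<open>(\<xi>\<^sub>r - \<cdot>)\<^sub>+\<^sup>k\<close>; knots at 0 contribute nothing for \<open>y > 0\<close>. The knot 1 has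
  multiplicity \<open>p + 1\<close>, so it contributes all powers \<open>(1 - \<cdot>)\<^sub>+\<^sup>q\<close>, \<open>q \<le> k\<close>, whose coefficients follow
  the recursion obtained by writing \<open>y = 1 - z\<close> in the Cox--de Boor weights.
  \<open>spline_repr F\<close> replaces each \<open>(c - \<cdot>)\<^sub>+\<^sup>m\<close> by \<open>F m c\<close>, so that linear operations on a B-spline
  can be carried out on the truncated powers.\<close>

definition trunc_coeff :: "nat \<Rightarrow> nat \<Rightarrow> nat \<Rightarrow> nat \<Rightarrow> nat \<Rightarrow> real" where
  "trunc_coeff p n k i r = (knot p n (i+k+1) - knot p n i) / knot_prod p n i (i+k+1) r"

fun end_coeff :: "nat \<Rightarrow> nat \<Rightarrow> nat \<Rightarrow> nat \<Rightarrow> nat \<Rightarrow> real" where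
  "end_coeff p n 0 i q = (if q = 0 \<and> knot p n (i+1) = 1 \<and> knot p n i \<noteq> 1 then 1 else 0)"
| "end_coeff p n (Suc k) i q =
     (if q = 0 then 0
      else - end_coeff p n k i (q-1) / (knot p n (i+k+1) - knot p n i)
           + end_coeff p n k (i+1) (q-1) / (knot p n (i+k+2) - knot p n (i+1)))
     + left_weight p n k i 1 * end_coeff p n k i q
     + right_weight p n k i 1 * end_coeff p n k (i+1) q"

lemma end_coeff_eq_0: "k < q \<Longrightarrow> end_coeff p n k i q = 0"
  by (induction k arbitrary: i q) auto

definition interior_part :: "(nat \<Rightarrow> real \<Rightarrow> real) \<Rightarrow> nat \<Rightarrow> nat \<Rightarrow> nat \<Rightarrow> nat \<Rightarrow> real" where
  "interior_part F p n k i =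
     (\<Sum>r=i..i+k+1. if interior_knot p n r then trunc_coeff p n k i r * F k (knot p n r) else 0)"

definition end_part :: "(nat \<Rightarrow> real \<Rightarrow> real) \<Rightarrow> nat \<Rightarrow> nat \<Rightarrow> nat \<Rightarrow> nat \<Rightarrow> real" where
  "end_part F p n k i = (\<Sum>q\<le>k. end_coeff p n k i q * F q 1)"

definition spline_repr :: "(nat \<Rightarrow> real \<Rightarrow> real) \<Rightarrow> nat \<Rightarrow> nat \<Rightarrow> nat \<Rightarrow> nat \<Rightarrow> real" where
  "spline_repr F p n k i = interior_part F p n k i + end_part F p n k i"

definition trunc_term :: "nat \<Rightarrow> nat \<Rightarrow> nat \<Rightarrow> nat \<Rightarrow> nat \<Rightarrow> real \<Rightarrow> real" where
  "trunc_term p n k i r y =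
     (if interior_knot p n r \<and> i \<le> r \<and> r \<le> i+k+1
      then trunc_coeff p n k i r * trunc_pow k (knot p n r) y else 0)"

lemma interior_part_trunc_pow:
  "interior_part (\<lambda>m c. trunc_pow m c y) p n k i = (\<Sum>r=i..i+k+1. trunc_term p n k i r y)"
  unfolding interior_part_def trunc_term_def by (rule sum.cong) auto

lemma interior_part_trunc_pow_ext:
  "interior_part (\<lambda>m c. trunc_pow m c y) p n k i = (\<Sum>r=i..i+k+2. trunc_term p n k i r y)"
  unfolding interior_part_trunc_pow
  by (rule sum.mono_neutral_left) (auto simp: trunc_term_def)

lemma interior_part_trunc_pow_Suc:
  "interior_part (\<lambda>m c. trunc_pow m c y) p n k (Suc i) = (\<Sum>r=i..i+k+2. trunc_term p n k (Suc i) r y)"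
  unfolding interior_part_trunc_pow
  by (rule sum.mono_neutral_left) (auto simp: trunc_term_def)

text \<open>Writing \<open>y = c - z\<close> for the knot \<open>c = \<xi>\<^sub>r\<close>, one Cox--de Boor step applied to the terms at \<open>c\<close>
  amounts to these identities, according as \<open>c\<close> is an inner, the first or the last knot of the support.\<close>

lemma divdiff_step_inner:
  fixes A B C P c z :: real
  assumes "B - A \<noteq> 0" "C - D \<noteq> 0" "c - A \<noteq> 0" "c - C \<noteq> 0" "P \<noteq> 0"
  shows "(c - z - A) / (B - A) * ((B - A) / ((c - A) * P) * z ^ k)
       + (C - (c - z)) / (C - D) * ((C - D) / (P * (c - C)) * z ^ k)
       = (C - A) / ((c - A) * (P * (c - C))) * z ^ Suc k"
proof -
  have cancel: "(c - z - A) / (B - A) * ((B - A) / ((c - A) * P) * z ^ k) = (c - z - A) / ((c - A) * P) * z ^ k"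
    "(C - (c - z)) / (C - D) * ((C - D) / (P * (c - C)) * z ^ k) = (C - (c - z)) / (P * (c - C)) * z ^ k"
    using assms by simp_all
  define a where "a = c - A"
  define b where "b = c - C"
  have A: "A = c - a" and C: "C = c - b" by (simp_all add: a_def b_def)
  have "a \<noteq> 0" "b \<noteq> 0" using assms by (simp_all add: a_def b_def)
  with assms(5) have "(c - z - A) / ((c - A) * P) * z ^ k + (C - (c - z)) / (P * (c - C)) * z ^ k
      = (C - A) / ((c - A) * (P * (c - C))) * z ^ Suc k"
    unfolding A C by (simp add: field_simps; simp add: algebra_simps)
  thus ?thesis by (simp only: cancel)
qed

lemma divdiff_step_first:
  fixes A B C P z :: real
  assumes "B - A \<noteq> 0" "A - C \<noteq> 0" "P \<noteq> 0"
  shows "(A - z - A) / (B - A) * ((B - A) / P * z ^ k) = (C - A) / (P * (A - C)) * z ^ Suc k"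
proof -
  define b where "b = A - C"
  have C: "C = A - b" by (simp add: b_def)
  have "b \<noteq> 0" using assms by (simp add: b_def)
  with assms show ?thesis unfolding C
    by (simp add: field_simps; simp add: algebra_simps)
qed

lemma divdiff_step_last:
  fixes A C D P z :: real
  assumes "C - D \<noteq> 0" "C - A \<noteq> 0" "P \<noteq> 0"
  shows "(C - (C - z)) / (C - D) * ((C - D) / P * z ^ k) = (C - A) / ((C - A) * P) * z ^ Suc k"
proof -
  define a where "a = C - A"
  have A: "A = C - a" by (simp add: a_def)
  have "a \<noteq> 0" using assms by (simp add: a_def)
  with assms show ?thesis unfolding A
    by (simp add: field_simps; simp add: algebra_simps)
qed

context
  fixes p n k i r :: nat and y z :: real
  assumes n: "1 \<le> n" and interior: "interior_knot p n r"
    and z: "y = knot p n r - z" "0 < z"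
begin

private lemma knot_ne: "l \<noteq> r \<Longrightarrow> knot p n l \<noteq> knot p n r"
  using interior_knot_simple[OF n interior] by blast

private lemma trunc_pow_z: "trunc_pow m (knot p n r) y = z ^ m"
  using z by (simp add: trunc_pow_def)

lemma trunc_term_step_first:
  assumes "r = i"
  shows "left_weight p n k i y * trunc_term p n k i r y + right_weight p n k i y * trunc_term p n k (Suc i) r y
       = trunc_term p n (Suc k) i r y"
proof -
  let ?\<xi> = "knot p n"
  have prod: "knot_prod p n i (Suc (i+k+1)) r = knot_prod p n i (i+k+1) r * (?\<xi> r - ?\<xi> (i+k+2))"
    using knot_prod_top[of r "i+k+1" i p n] assms by simp
  have r: "i \<le> r" "r \<le> i+k+1" "\<not> Suc i \<le> r" using assms by auto
  have t1: "trunc_term p n k i r y = (?\<xi> (i+k+1) - ?\<xi> i) / knot_prod p n i (i+k+1) r * z^k"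
    using interior r by (simp add: trunc_term_def trunc_pow_z trunc_coeff_def)
  have t2: "trunc_term p n k (Suc i) r y = 0" using r by (simp add: trunc_term_def)
  have t3: "trunc_term p n (Suc k) i r y
      = (?\<xi> (i+k+2) - ?\<xi> i) / (knot_prod p n i (i+k+1) r * (?\<xi> r - ?\<xi> (i+k+2))) * z^Suc k"
    using interior prod[simplified] r by (simp add: trunc_term_def trunc_pow_z trunc_coeff_def)
  have "?\<xi> (i+k+1) - ?\<xi> i \<noteq> 0" "?\<xi> i - ?\<xi> (i+k+2) \<noteq> 0"
    using knot_ne[of "i+k+1"] knot_ne[of "i+k+2"] assms by auto
  with knot_prod_nonzero[OF n interior] show ?thesis
    unfolding t1 t2 t3 left_weight_def unfolding z(1) assms
    by (simp only: mult_zero_right add_0_right) (rule divdiff_step_first)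
qed

lemma trunc_term_step_last:
  assumes "r = i+k+2"
  shows "left_weight p n k i y * trunc_term p n k i r y + right_weight p n k i y * trunc_term p n k (Suc i) r y
       = trunc_term p n (Suc k) i r y"
proof -
  let ?\<xi> = "knot p n"
  have prod: "knot_prod p n i (i+k+2) r = (?\<xi> r - ?\<xi> i) * knot_prod p n (Suc i) (i+k+2) r"
    by (rule knot_prod_bot) (use assms in auto)
  have r: "\<not> r \<le> i+k+1" "Suc i \<le> r" "r \<le> i+k+2" using assms by auto
  have t1: "trunc_term p n k i r y = 0" using r by (simp add: trunc_term_def)
  have t2: "trunc_term p n k (Suc i) r y
      = (?\<xi> (i+k+2) - ?\<xi> (i+1)) / knot_prod p n (Suc i) (i+k+2) r * z^k"
    using interior r by (simp add: trunc_term_def trunc_pow_z trunc_coeff_def)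
  have t3: "trunc_term p n (Suc k) i r y
      = (?\<xi> (i+k+2) - ?\<xi> i) / ((?\<xi> r - ?\<xi> i) * knot_prod p n (Suc i) (i+k+2) r) * z^Suc k"
    using interior prod[simplified] r by (simp add: trunc_term_def trunc_pow_z trunc_coeff_def)
  have "?\<xi> (i+k+2) - ?\<xi> (i+1) \<noteq> 0" "?\<xi> (i+k+2) - ?\<xi> i \<noteq> 0"
    using knot_ne[of "i+1"] knot_ne[of i] assms by auto
  with knot_prod_nonzero[OF n interior] show ?thesis
    unfolding t1 t2 t3 right_weight_def unfolding z(1) assms
    by (simp only: mult_zero_right add_0_left) (rule divdiff_step_last)
qed

lemma trunc_term_step_inner:
  assumes "i < r" "r < i+k+2"
  shows "left_weight p n k i y * trunc_term p n k i r y + right_weight p n k i y * trunc_term p n k (Suc i) r y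
       = trunc_term p n (Suc k) i r y"
proof -
  let ?\<xi> = "knot p n"
  define P where "P = knot_prod p n (Suc i) (i+k+1) r"
  have P1: "knot_prod p n i (i+k+1) r = (?\<xi> r - ?\<xi> i) * P"
    unfolding P_def by (rule knot_prod_bot) (use assms in auto)
  have P2: "knot_prod p n (Suc i) (i+k+2) r = P * (?\<xi> r - ?\<xi> (i+k+2))"
    unfolding P_def using knot_prod_top[of r "i+k+1" "Suc i" p n] assms by auto
  have P3: "knot_prod p n i (i+k+2) r = (?\<xi> r - ?\<xi> i) * (P * (?\<xi> r - ?\<xi> (i+k+2)))"
    using knot_prod_bot[of r i "i+k+2" p n] P2 assms by auto
  have t1: "trunc_term p n k i r y = (?\<xi> (i+k+1) - ?\<xi> i) / ((?\<xi> r - ?\<xi> i) * P) * z^k"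
    using assms interior by (simp add: trunc_term_def trunc_pow_z trunc_coeff_def P1[simplified])
  have t2: "trunc_term p n k (Suc i) r y
      = (?\<xi> (i+k+2) - ?\<xi> (i+1)) / (P * (?\<xi> r - ?\<xi> (i+k+2))) * z^k"
    using assms interior by (simp add: trunc_term_def trunc_pow_z trunc_coeff_def P2[simplified])
  have t3: "trunc_term p n (Suc k) i r y
      = (?\<xi> (i+k+2) - ?\<xi> i) / ((?\<xi> r - ?\<xi> i) * (P * (?\<xi> r - ?\<xi> (i+k+2)))) * z^Suc k"
    using assms interior by (simp add: trunc_term_def trunc_pow_z trunc_coeff_def P3[simplified])
  have "?\<xi> (i+k+1) - ?\<xi> i \<noteq> 0"
    using knot_ne[of "i+k+1"] knot_ne[of i] assms knot_mono[OF n, of i r p] knot_mono[OF n, of r "i+k+1" p]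
    by fastforce
  moreover have "?\<xi> (i+k+2) - ?\<xi> (i+1) \<noteq> 0"
    using knot_ne[of "i+k+2"] knot_ne[of "i+1"] assms knot_mono[OF n, of "i+1" r p]
      knot_mono[OF n, of r "i+k+2" p]
    by fastforce
  moreover have "?\<xi> r - ?\<xi> i \<noteq> 0" "?\<xi> r - ?\<xi> (i+k+2) \<noteq> 0"
    using knot_ne[of i] knot_ne[of "i+k+2"] assms by auto
  ultimately show ?thesis
    unfolding t1 t2 t3 left_weight_def right_weight_def unfolding z(1)
    by (rule divdiff_step_inner) (use knot_prod_nonzero[OF n interior] P_def in auto)
qed

end

lemma trunc_term_step:
  assumes "1 \<le> n"
  shows "left_weight p n k i y * trunc_term p n k i r y + right_weight p n k i y * trunc_term p n k (Suc i) r y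
       = trunc_term p n (Suc k) i r y"
proof (cases "interior_knot p n r \<and> i \<le> r \<and> r \<le> i+k+2 \<and> y < knot p n r")
  case True
  have z: "y = knot p n r - (knot p n r - y)" "0 < knot p n r - y" using True by auto
  consider "r = i" | "r = i+k+2" | "i < r" "r < i+k+2" using True by linarith
  then show ?thesis
    using trunc_term_step_first[OF assms _ z] trunc_term_step_last[OF assms _ z]
      trunc_term_step_inner[OF assms _ z] True
    by cases blast+
qed (auto simp: trunc_term_def trunc_pow_def)

lemma end_part_trunc_pow_step:
  "left_weight p n k i y * end_part (\<lambda>m c. trunc_pow m c y) p n k i
   + right_weight p n k i y * end_part (\<lambda>m c. trunc_pow m c y) p n k (Suc i)
   = end_part (\<lambda>m c. trunc_pow m c y) p n (Suc k) i"
proof (cases "y < 1")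
  case False thus ?thesis by (simp add: end_part_def trunc_pow_def)
next
  case True
  define z where "z = 1 - y"
  have tz: "\<And>q. trunc_pow q 1 y = z ^ q" using True by (simp add: trunc_pow_def z_def)
  define d1 where "d1 = knot p n (i+k+1) - knot p n i"
  define d2 where "d2 = knot p n (i+k+2) - knot p n (i+1)"
  define S1 where "S1 = (\<Sum>q\<le>k. end_coeff p n k i q * z^q)"
  define S2 where "S2 = (\<Sum>q\<le>k. end_coeff p n k (Suc i) q * z^q)"
  have ext: "\<And>j. (\<Sum>q\<le>Suc k. end_coeff p n k j q * z^q) = (\<Sum>q\<le>k. end_coeff p n k j q * z^q)"
    by (simp add: end_coeff_eq_0)
  have shift: "(\<Sum>q\<le>Suc k. (if q = 0 then 0
        else - end_coeff p n k i (q-1) / d1 + end_coeff p n k (Suc i) (q-1) / d2) * z^q)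
      = (\<Sum>q\<le>k. (- end_coeff p n k i q / d1 + end_coeff p n k (Suc i) q / d2) * z^Suc q)"
    by (simp add: sum.atMost_Suc_shift del: sum.atMost_Suc)
  have "end_part (\<lambda>m c. trunc_pow m c y) p n (Suc k) i
      = (\<Sum>q\<le>Suc k. ((if q = 0 then 0
          else - end_coeff p n k i (q-1) / d1 + end_coeff p n k (Suc i) (q-1) / d2)
        + left_weight p n k i 1 * end_coeff p n k i q
        + right_weight p n k i 1 * end_coeff p n k (Suc i) q) * z^q)"
    unfolding end_part_def tz d1_def d2_def
    by (rule sum.cong) (simp_all add: add.commute add.left_commute)
  also have "\<dots> = (\<Sum>q\<le>k. (- end_coeff p n k i q / d1 + end_coeff p n k (Suc i) q / d2) * z^Suc q)
      + left_weight p n k i 1 * S1 + right_weight p n k i 1 * S2"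
    by (simp only: distrib_right sum.distrib shift sum_distrib_left[symmetric] mult.assoc ext S1_def S2_def)
  also have "(\<Sum>q\<le>k. (- end_coeff p n k i q / d1 + end_coeff p n k (Suc i) q / d2) * z^Suc q)
      = - z * S1 / d1 + z * S2 / d2"
    by (simp add: S1_def S2_def sum_distrib_left sum_divide_distrib sum.distrib[symmetric] algebra_simps)
  finally have R: "end_part (\<lambda>m c. trunc_pow m c y) p n (Suc k) i
      = - z * S1 / d1 + z * S2 / d2 + left_weight p n k i 1 * S1 + right_weight p n k i 1 * S2" .
  have L: "end_part (\<lambda>m c. trunc_pow m c y) p n k i = S1"
    "end_part (\<lambda>m c. trunc_pow m c y) p n k (Suc i) = S2"
    by (simp_all add: end_part_def tz S1_def S2_def)
  have w: "left_weight p n k i y = left_weight p n k i 1 - z / d1"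
    "right_weight p n k i y = right_weight p n k i 1 + z / d2"
    unfolding left_weight_def right_weight_def d1_def d2_def z_def
    by (simp_all add: diff_divide_distrib[symmetric] add_divide_distrib[symmetric])
  show ?thesis unfolding R L w by (simp add: algebra_simps)
qed

lemma interior_part_trunc_pow_step:
  assumes n: "1 \<le> n"
  shows "left_weight p n k i y * interior_part (\<lambda>m c. trunc_pow m c y) p n k i
   + right_weight p n k i y * interior_part (\<lambda>m c. trunc_pow m c y) p n k (Suc i)
   = interior_part (\<lambda>m c. trunc_pow m c y) p n (Suc k) i"
proof -
  have "left_weight p n k i y * interior_part (\<lambda>m c. trunc_pow m c y) p n k i
      + right_weight p n k i y * interior_part (\<lambda>m c. trunc_pow m c y) p n k (Suc i)
      = (\<Sum>r=i..i+k+2. left_weight p n k i y * trunc_term p n k i r y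
          + right_weight p n k i y * trunc_term p n k (Suc i) r y)"
    by (simp only: interior_part_trunc_pow_ext[of y p n k i] interior_part_trunc_pow_Suc
        sum_distrib_left sum.distrib)
  also have "\<dots> = interior_part (\<lambda>m c. trunc_pow m c y) p n (Suc k) i"
    by (simp add: trunc_term_step[OF n] interior_part_trunc_pow)
  finally show ?thesis .
qed

lemma bspline_0_eq_spline_repr:
  assumes n: "1 \<le> n" and y: "0 < y"
  shows "bspline p n 0 i y = spline_repr (\<lambda>m c. trunc_pow m c y) p n 0 i"
proof -
  define A where "A = knot p n i"
  define B where "B = knot p n (Suc i)"
  have AB: "0 \<le> A" "A \<le> B" "B \<le> 1"
    using knot_nonneg knot_mono[OF n] knot_le_1[OF n] unfolding A_def B_def by auto
  have s: "{i..Suc i} - {i} = {Suc i}" "{i..Suc i} - {Suc i} = {i}" by auto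
  have ne1: "interior_knot p n i \<Longrightarrow> A \<noteq> B" and ne2: "interior_knot p n (Suc i) \<Longrightarrow> A \<noteq> B"
    using interior_knot_simple[OF n, of p i "Suc i"] interior_knot_simple[OF n, of p "Suc i" i]
    unfolding A_def B_def by auto
  have "interior_knot p n i \<Longrightarrow> trunc_coeff p n 0 i i = -1"
    using ne1 by (simp add: trunc_coeff_def knot_prod_def s A_def B_def divide_eq_minus_1_iff)
  moreover have "interior_knot p n (Suc i) \<Longrightarrow> trunc_coeff p n 0 i (Suc i) = 1"
    using ne2 by (simp add: trunc_coeff_def knot_prod_def s A_def B_def)
  ultimately have "interior_part (\<lambda>m c. trunc_pow m c y) p n 0 i
      = (if interior_knot p n i then - trunc_pow 0 A y else 0)
      + (if interior_knot p n (Suc i) then trunc_pow 0 B y else 0)"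
    by (simp add: interior_part_def A_def B_def)
  moreover have "end_part (\<lambda>m c. trunc_pow m c y) p n 0 i = (if B = 1 \<and> A \<noteq> 1 then trunc_pow 0 1 y else 0)"
    by (simp add: end_part_def A_def B_def)
  moreover have "bspline p n 0 i y = (if A \<le> y \<and> y < B then 1 else 0)"
    by (simp add: A_def B_def)
  ultimately show ?thesis unfolding spline_repr_def using AB y ne1 ne2
    by (auto simp: trunc_pow_def interior_knot_def A_def[symmetric] B_def[symmetric])
qed

theorem bspline_eq_spline_repr:
  assumes n: "1 \<le> n" and y: "0 < y"
  shows "bspline p n k i y = spline_repr (\<lambda>m c. trunc_pow m c y) p n k i"
proof (induction k arbitrary: i)
  case 0
  show ?case by (rule bspline_0_eq_spline_repr[OF n y])
next
  case (Suc k)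
  show ?case
    using interior_part_trunc_pow_step[OF n, of p k i y] end_part_trunc_pow_step[of p n k i y]
    unfolding bspline_Suc_weights Suc.IH spline_repr_def by (simp add: algebra_simps)
qed

section \<open>Size of B-splines and of their coefficients\<close>

lemma bspline_eq_0_outside:
  assumes n: "1 \<le> n" and y: "y < knot p n i \<or> knot p n (i+k+1) \<le> y"
  shows "bspline p n k i y = 0"
  using y
proof (induction k arbitrary: i)
  case (Suc k)
  have "knot p n i \<le> knot p n (Suc i)" "knot p n (i+k+1) \<le> knot p n (i+k+2)"
    using knot_mono[OF n] by auto
  with Suc.prems have "bspline p n k i y = 0" "bspline p n k (Suc i) y = 0"
    by (auto intro!: Suc.IH)
  thus ?case by simp
qed auto

lemma abs_left_weight_le:
  assumes "1 \<le> n" "bspline p n k i y \<noteq> 0"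
  shows "\<bar>left_weight p n k i y\<bar> \<le> 1"
proof -
  have "knot p n i \<le> y" "y < knot p n (i+k+1)"
    using bspline_eq_0_outside[OF assms(1), of y p i k] assms(2) by linarith+
  thus ?thesis by (auto simp: left_weight_def divide_simps)
qed

lemma abs_right_weight_le:
  assumes "1 \<le> n" "bspline p n k (Suc i) y \<noteq> 0"
  shows "\<bar>right_weight p n k i y\<bar> \<le> 1"
proof -
  have "knot p n (Suc i) \<le> y" "y < knot p n (i+k+2)"
    using bspline_eq_0_outside[OF assms(1), of y p "Suc i" k] assms(2) by force+
  thus ?thesis by (auto simp: right_weight_def divide_simps)
qed

lemma abs_bspline_le:
  assumes n: "1 \<le> n"
  shows "\<bar>bspline p n k i y\<bar> \<le> 2^k"
proof (induction k arbitrary: i)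
  case (Suc k)
  have "\<bar>left_weight p n k i y * bspline p n k i y\<bar> \<le> 1 * 2^k"
    using abs_left_weight_le[OF n, of p k i y] Suc.IH[of i]
    by (cases "bspline p n k i y = 0") (auto simp only: abs_mult intro!: mult_mono)
  moreover have "\<bar>right_weight p n k i y * bspline p n k (Suc i) y\<bar> \<le> 1 * 2^k"
    using abs_right_weight_le[OF n, of p k i y] Suc.IH[of "Suc i"]
    by (cases "bspline p n k (Suc i) y = 0") (auto simp only: abs_mult intro!: mult_mono)
  ultimately show ?case unfolding bspline_Suc_weights by simp
qed simp

lemma abs_divide_knot_diff_le:
  assumes n: "1 \<le> n"
  shows "\<bar>x / (knot p n a - knot p n b)\<bar> \<le> \<bar>x\<bar> * n"
proof (cases "knot p n a = knot p n b")
  case False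
  hence g: "1 / real n \<le> \<bar>knot p n a - knot p n b\<bar>" by (rule knot_diff_ge[OF n])
  have np: "real n > 0" using n by simp
  have "\<bar>x / (knot p n a - knot p n b)\<bar> = \<bar>x\<bar> / \<bar>knot p n a - knot p n b\<bar>" by (simp add: abs_divide)
  also have "\<dots> \<le> \<bar>x\<bar> / (1 / real n)"
    using g np False by (intro divide_left_mono) auto
  finally show ?thesis using np by simp
qed simp

lemma abs_trunc_coeff_le:
  assumes n: "1 \<le> n" and r: "interior_knot p n r" "i \<le> r" "r \<le> i+k+1"
  shows "\<bar>trunc_coeff p n k i r\<bar> \<le> real (k+1) * real n ^ k"
proof -
  have np: "real n > 0" using n by simp
  have d: "0 \<le> knot p n (i+k+1) - knot p n i" "knot p n (i+k+1) - knot p n i \<le> real (k+1) / n"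
    using knot_mono[OF n, of i "i+k+1" p] knot_diff_le[OF n, of i "i+k+1" p] by auto
  have "(\<Prod>l\<in>{i..i+k+1}-{r}. 1 / real n) \<le> (\<Prod>l\<in>{i..i+k+1}-{r}. \<bar>knot p n r - knot p n l\<bar>)"
    using interior_knot_simple[OF n r(1)] knot_diff_ge[OF n] np by (intro prod_mono) force
  moreover have "card ({i..i+k+1} - {r}) = k+1" using r by simp
  ultimately have P: "(1 / real n) ^ (k+1) \<le> \<bar>knot_prod p n i (i+k+1) r\<bar>"
    by (simp add: knot_prod_def abs_prod)
  have "\<bar>trunc_coeff p n k i r\<bar> = (knot p n (i+k+1) - knot p n i) / \<bar>knot_prod p n i (i+k+1) r\<bar>"
    using d by (simp add: trunc_coeff_def)
  also have "\<dots> \<le> (real (k+1) / n) / ((1 / real n) ^ (k+1))"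
    using d P np by (intro frac_le) auto
  also have "\<dots> = real (k+1) * real n ^ k" using np by (simp add: field_simps)
  finally show ?thesis .
qed

lemma end_coeff_nonzero_imp:
  assumes n: "1 \<le> n" and "end_coeff p n k i q \<noteq> 0"
  shows "knot p n (i+k+1) = 1 \<and> knot p n i < 1"
  using assms(2)
proof (induction k arbitrary: i q)
  case 0 thus ?case using knot_le_1[OF n, of p i] by (auto split: if_splits)
next
  case (Suc k)
  have "knot p n (i+k+1) \<le> knot p n (i+k+2)" "knot p n (i+k+2) \<le> 1" "knot p n i \<le> knot p n (Suc i)"
    using knot_mono[OF n] knot_le_1[OF n] by auto
  moreover have "end_coeff p n k i (q-1) \<noteq> 0 \<or> end_coeff p n k (Suc i) (q-1) \<noteq> 0
      \<or> end_coeff p n k i q \<noteq> 0 \<or> end_coeff p n k (Suc i) q \<noteq> 0"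
    using Suc.prems by (auto split: if_splits)
  ultimately show ?case using Suc.IH by fastforce
qed

lemma abs_end_coeff_le:
  assumes n: "1 \<le> n"
  shows "\<bar>end_coeff p n k i q\<bar> \<le> 3^k * real n ^ q"
proof (induction k arbitrary: i q)
  case (Suc k)
  have np: "real n > 0" using n by simp
  define T where "T = (if q = 0 then 0
    else - end_coeff p n k i (q-1) / (knot p n (i+k+1) - knot p n i)
         + end_coeff p n k (i+1) (q-1) / (knot p n (i+k+2) - knot p n (i+1)))"
  have eq: "end_coeff p n (Suc k) i q = T + left_weight p n k i 1 * end_coeff p n k i q
      + right_weight p n k i 1 * end_coeff p n k (i+1) q"
    by (simp add: T_def)
  have "\<bar>T\<bar> \<le> 2 * 3^k * real n ^ q"
  proof (cases q)
    case (Suc q')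
    have quot: "\<bar>end_coeff p n k j q' / (knot p n a - knot p n b)\<bar> \<le> 3^k * real n ^ q" for j a b
      using abs_divide_knot_diff_le[OF n, of "end_coeff p n k j q'" p a b] Suc.IH[of j q'] np Suc
      by (smt (verit, ccfv_SIG) mult.assoc mult.commute mult_right_mono of_nat_0_le_iff power_Suc)
    have "\<bar>T\<bar> \<le> \<bar>end_coeff p n k i q' / (knot p n (i+k+1) - knot p n i)\<bar>
        + \<bar>end_coeff p n k (i+1) q' / (knot p n (i+k+2) - knot p n (i+1))\<bar>"
      unfolding T_def using Suc by (simp del: abs_divide)
    with quot[of i "i+k+1" i] quot[of "i+1" "i+k+2" "i+1"] show ?thesis by linarith
  qed (simp add: T_def)
  moreover have "\<bar>left_weight p n k i 1 * end_coeff p n k i q\<bar> \<le> 3^k * real n ^ q"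
    using end_coeff_nonzero_imp[OF n, of p k i q] Suc.IH[of i q]
    by (cases "end_coeff p n k i q = 0") (auto simp: left_weight_def)
  moreover have "right_weight p n k i 1 * end_coeff p n k (i+1) q = 0"
    using end_coeff_nonzero_imp[OF n, of p k "i+1" q]
    by (cases "end_coeff p n k (i+1) q = 0") (auto simp: right_weight_def)
  moreover have "3^Suc k * real n ^ q = 2 * 3^k * real n ^ q + 3^k * real n ^ q" by simp
  ultimately show ?case unfolding eq by (smt (verit) abs_triangle_ineq)
qed simp

section \<open>The Riemann--Liouville derivative of a B-spline\<close>

definition pos_powr :: "real \<Rightarrow> real \<Rightarrow> real" where
  "pos_powr \<beta> z = (if 0 < z then z powr \<beta> else 0)"

lemma pos_powr_nonneg: "0 \<le> pos_powr \<beta> z"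
  by (simp add: pos_powr_def)

lemma has_integral_Beta_shifted:
  fixes \<alpha> t c :: real
  assumes "\<alpha> < 2" "t < c"
  shows "((\<lambda>y. (y - t) powr (1 - \<alpha>) * (c - y) ^ m) has_integral
           (Beta (2 - \<alpha>) (real m + 1) * (c - t) powr (real m + 2 - \<alpha>))) {t..c}"
proof -
  define L where "L = c - t"
  have L: "0 < L" using assms by (simp add: L_def)
  have B0: "((\<lambda>s. s powr (1 - \<alpha>) * (1 - s) powr (real m)) has_integral Beta (2 - \<alpha>) (real m + 1)) {0..1}"
    using has_integral_Beta_real[of "2 - \<alpha>" "real m + 1"] assms by simp
  have B1: "((\<lambda>s. s powr (1 - \<alpha>) * (1 - s) ^ m) has_integral Beta (2 - \<alpha>) (real m + 1)) {0..1}"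
    by (rule has_integral_spike[OF negligible_sing[of 1] _ B0]) (auto simp: powr_realpow)
  have B2: "((\<lambda>s. L powr (real m + 1 - \<alpha>) * (s powr (1 - \<alpha>) * (1 - s) ^ m)) has_integral
           L powr (real m + 1 - \<alpha>) * Beta (2 - \<alpha>) (real m + 1)) {0..1}"
    by (rule has_integral_mult_right[OF B1])
  have B3: "((\<lambda>s. (\<lambda>y. (y - t) powr (1 - \<alpha>) * (c - y) ^ m) (L *\<^sub>R s + t)) has_integral
           L powr (real m + 1 - \<alpha>) * Beta (2 - \<alpha>) (real m + 1)) {0..1}"
  proof (rule has_integral_eq[OF _ B2])
    fix s :: real assume s: "s \<in> {0..1}"
    have "(L *\<^sub>R s + t - t) powr (1 - \<alpha>) = L powr (1 - \<alpha>) * s powr (1 - \<alpha>)"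
      using s L by (simp add: powr_mult)
    moreover have "(c - (L *\<^sub>R s + t)) ^ m = L ^ m * (1 - s) ^ m"
      by (simp add: L_def power_mult_distrib[symmetric] algebra_simps)
    moreover have "L powr (real m + 1 - \<alpha>) = L powr (1 - \<alpha>) * L ^ m"
      using L by (simp add: powr_add[symmetric] powr_realpow[symmetric] algebra_simps)
    ultimately show "L powr (real m + 1 - \<alpha>) * (s powr (1 - \<alpha>) * (1 - s) ^ m) =
        (L *\<^sub>R s + t - t) powr (1 - \<alpha>) * (c - (L *\<^sub>R s + t)) ^ m" by simp
  qed
  have e: "L powr (real m + 1 - \<alpha>) * Beta (2 - \<alpha>) (real m + 1) =
     (Beta (2 - \<alpha>) (real m + 1) * (c - t) powr (real m + 2 - \<alpha>)) /\<^sub>R L ^ DIM(real)"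
  proof -
    have "L powr (real m + 2 - \<alpha>) = L powr ((real m + 1 - \<alpha>) + 1)" by (simp add: algebra_simps)
    also have "\<dots> = L powr (real m + 1 - \<alpha>) * L powr 1" by (rule powr_add)
    also have "\<dots> = L powr (real m + 1 - \<alpha>) * L" using L by (simp only: powr_one_gt_zero_iff powr_one)
    finally have p: "L powr (real m + 2 - \<alpha>) = L powr (real m + 1 - \<alpha>) * L" .
    show ?thesis using L by (simp add: L_def[symmetric] p)
  qed
  have box: "cbox ((t - t) /\<^sub>R L) ((c - t) /\<^sub>R L) = {0..1}" using L by (simp add: L_def)
  show ?thesis
    using has_integral_affinity_iff[OF L, where f="\<lambda>y. (y - t) powr (1 - \<alpha>) * (c - y) ^ m" and c=t and a=t and b=c
       and I="Beta (2 - \<alpha>) (real m + 1) * (c - t) powr (real m + 2 - \<alpha>)"] B3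
    unfolding box e by simp
qed

lemma has_integral_trunc_pow:
  fixes f :: "real \<Rightarrow> real"
  assumes "s \<le> c" "c \<le> 1" "((\<lambda>y. f y * (c - y) ^ m) has_integral I) {s..c}"
  shows "((\<lambda>y. f y * trunc_pow m c y) has_integral I) {s..1}"
proof -
  have "((\<lambda>y. f y * trunc_pow m c y) has_integral I) {s..c}"
    by (rule has_integral_spike[OF negligible_sing[of c] _ assms(3)]) (auto simp: trunc_pow_def)
  moreover have "((\<lambda>y. f y * trunc_pow m c y) has_integral 0) {c..1}"
    by (rule has_integral_is_0) (auto simp: trunc_pow_def)
  ultimately show ?thesis using has_integral_combine[OF assms(1,2)] by fastforce
qed

lemma has_integral_rl_kernel_trunc_pow:
  assumes "\<alpha> < 2" "c \<le> 1" "t \<le> 1"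
  shows "((\<lambda>y. (y - t) powr (1 - \<alpha>) * trunc_pow m c y) has_integral
           Beta (2 - \<alpha>) (real m + 1) * pos_powr (real m + 2 - \<alpha>) (c - t)) {t..1}"
proof (cases "t < c")
  case True
  show ?thesis using has_integral_trunc_pow[OF _ assms(2) has_integral_Beta_shifted[OF assms(1) True, of m]] True
    by (simp add: pos_powr_def)
next
  case False
  have "((\<lambda>y. (y - t) powr (1 - \<alpha>) * trunc_pow m c y) has_integral 0) {t..1}"
    by (rule has_integral_is_0) (use False in \<open>auto simp: trunc_pow_def\<close>)
  with False show ?thesis by (simp add: pos_powr_def)
qed

lemma pos_powr_has_derivative:
  assumes "1 < \<beta> \<or> t < c"
  shows "((\<lambda>t. pos_powr \<beta> (c - t)) has_real_derivative (- \<beta> * pos_powr (\<beta> - 1) (c - t))) (at t)"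
proof -
  consider "t < c" | "c < t" | "t = c" "1 < \<beta>" using assms by linarith
  then show ?thesis
  proof cases
    case 1
    have d: "((\<lambda>t. (c - t) powr \<beta>) has_real_derivative (- \<beta> * (c - t) powr (\<beta> - 1))) (at t)"
      using 1 by (auto intro!: derivative_eq_intros)
    show ?thesis
      by (rule has_field_derivative_transform_within_open[OF _ open_lessThan[of c]])
         (use d 1 in \<open>auto simp: pos_powr_def\<close>)
  next
    case 2
    have d: "((\<lambda>t. 0) has_real_derivative 0) (at t)" by simp
    show ?thesis
      by (rule has_field_derivative_transform_within_open[OF _ open_greaterThan[of c]])
         (use d 2 in \<open>auto simp: pos_powr_def\<close>)
  next
    case 3
    have lim: "((\<lambda>h. pos_powr \<beta> (- h) / h) \<longlongrightarrow> 0) (at 0)"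
    proof (rule Lim_null_comparison)
      show "\<forall>\<^sub>F h in at 0. norm (pos_powr \<beta> (- h) / h) \<le> \<bar>h\<bar> powr (\<beta> - 1)"
      proof (rule always_eventually, rule allI)
        fix h :: real
        show "norm (pos_powr \<beta> (- h) / h) \<le> \<bar>h\<bar> powr (\<beta> - 1)"
        proof (cases "0 < - h")
          case True
          hence "\<bar>h\<bar> = - h" by simp
          hence "norm (pos_powr \<beta> (- h) / h) = \<bar>h\<bar> powr \<beta> / \<bar>h\<bar>" using True by (simp add: pos_powr_def)
          also have "\<dots> = \<bar>h\<bar> powr (\<beta> - 1)" using True by (simp add: powr_diff)
          finally show ?thesis by simp
        qed (simp add: pos_powr_def)
      qed
      show "((\<lambda>h. \<bar>h\<bar> powr (\<beta> - 1)) \<longlongrightarrow> 0) (at 0)"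
        by (rule tendsto_zero_powrI) (use 3 in \<open>auto intro!: tendsto_eq_intros\<close>)
    qed
    show ?thesis unfolding DERIV_def using lim 3 by (simp add: pos_powr_def)
  qed
qed

text \<open>The pairs \<open>(m, c)\<close> at which \<open>spline_repr F\<close> evaluates \<open>F\<close>: the degree \<open>k\<close> at interior knots
  of the support, and every degree at \<open>c = 1\<close>.\<close>

definition repr_node :: "nat \<Rightarrow> nat \<Rightarrow> nat \<Rightarrow> nat \<Rightarrow> nat \<Rightarrow> real \<Rightarrow> bool" where
  "repr_node p n k i m c \<longleftrightarrow> knot p n i \<le> c \<and> c \<le> 1 \<and> (c = 1 \<or> (m = k \<and> 0 < c \<and> c < 1))"

lemma repr_node_interior:
  "1 \<le> n \<Longrightarrow> r \<in> {i..i+k+1} \<Longrightarrow> interior_knot p n r \<Longrightarrow> repr_node p n k i k (knot p n r)"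
  unfolding repr_node_def interior_knot_def using knot_mono[of n i r p] by auto

lemma repr_node_end: "1 \<le> n \<Longrightarrow> repr_node p n k i q 1"
  unfolding repr_node_def using knot_le_1[of n p i] by auto

lemma has_integral_spline_repr:
  assumes n: "1 \<le> n"
    and G: "\<And>m c. repr_node p n k i m c \<Longrightarrow> (G m c has_integral F m c) S"
  shows "((\<lambda>y. spline_repr (\<lambda>m c. G m c y) p n k i) has_integral spline_repr F p n k i) S"
proof -
  have "((\<lambda>y. if interior_knot p n r then trunc_coeff p n k i r * G k (knot p n r) y else 0)
      has_integral (if interior_knot p n r then trunc_coeff p n k i r * F k (knot p n r) else 0)) S"
    if "r \<in> {i..i+k+1}" for r
    by (cases "interior_knot p n r") (auto intro!: has_integral_mult_right G repr_node_interior[OF n that])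
  then show ?thesis
    unfolding spline_repr_def interior_part_def end_part_def
    by (intro has_integral_add has_integral_sum)
       (auto intro!: has_integral_mult_right G repr_node_end[OF n])
qed

lemma has_derivative_spline_repr:
  assumes n: "1 \<le> n"
    and G: "\<And>m c. repr_node p n k i m c \<Longrightarrow> (G m c has_real_derivative G' m c) (at x)"
  shows "((\<lambda>t. spline_repr (\<lambda>m c. G m c t) p n k i) has_real_derivative spline_repr G' p n k i) (at x)"
proof -
  have "((\<lambda>t. if interior_knot p n r then trunc_coeff p n k i r * G k (knot p n r) t else 0)
      has_real_derivative (if interior_knot p n r then trunc_coeff p n k i r * G' k (knot p n r) else 0)) (at x)"
    if "r \<in> {i..i+k+1}" for r
    by (cases "interior_knot p n r") (auto intro!: DERIV_cmult G repr_node_interior[OF n that])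
  then show ?thesis
    unfolding spline_repr_def interior_part_def end_part_def
    by (intro DERIV_add DERIV_sum) (auto intro!: DERIV_cmult G repr_node_end[OF n])
qed

lemma spline_repr_cmult: "a * spline_repr F p n k i = spline_repr (\<lambda>m c. a * F m c) p n k i"
  by (simp add: spline_repr_def interior_part_def end_part_def distrib_left sum_distrib_left
      mult.left_commute if_distrib cong: if_cong)

lemma deriv_deriv_eq_locally:
  fixes g \<Phi> \<Phi>' :: "real \<Rightarrow> real"
  assumes S: "open S" "x \<in> S"
    and eq: "\<And>t. t \<in> S \<Longrightarrow> g t = \<Phi> t"
    and d1: "\<And>t. t \<in> S \<Longrightarrow> (\<Phi> has_real_derivative \<Phi>' t) (at t)"
    and d2: "(\<Phi>' has_real_derivative \<Phi>'') (at x)"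
  shows "deriv (deriv g) x = \<Phi>''"
proof (rule DERIV_imp_deriv)
  have dg: "deriv g t = \<Phi>' t" if "t \<in> S" for t
    by (rule DERIV_imp_deriv, rule has_field_derivative_transform_within_open[OF d1[OF that] S(1) that])
       (use eq in auto)
  show "(deriv g has_real_derivative \<Phi>'') (at x)"
    by (rule has_field_derivative_transform_within_open[OF d2 S]) (use dg in auto)
qed

text \<open>\<open>\<Gamma>(2 - \<alpha>)\<close> times the right Riemann--Liouville derivative of \<open>(c - \<cdot>)\<^sub>+\<^sup>m\<close> at \<open>x\<close>.\<close>

definition rl_trunc_pow :: "real \<Rightarrow> nat \<Rightarrow> real \<Rightarrow> real \<Rightarrow> real" where
  "rl_trunc_pow \<alpha> m c x =
     Beta (2 - \<alpha>) (real m + 1) * (real m + 2 - \<alpha>) * (real m + 1 - \<alpha>) * pos_powr (real m - \<alpha>) (c - x)"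

theorem rl_right_deriv_bspline:
  assumes n: "1 \<le> n" and k: "2 \<le> k" and \<alpha>: "\<alpha> < 2" and x: "0 < x" "x < 1"
  shows "rl_right_deriv \<alpha> (bspline p n k i) x = spline_repr (\<lambda>m c. rl_trunc_pow \<alpha> m c x) p n k i / Gamma (2 - \<alpha>)"
proof -
  let ?B = "\<lambda>m. Beta (2 - \<alpha>) (real m + 1)" and ?e = "\<lambda>m. real m + 2 - \<alpha>"
  define \<Phi> where "\<Phi> = (\<lambda>t. spline_repr (\<lambda>m c. ?B m * pos_powr (?e m) (c - t)) p n k i)"
  define \<Phi>' where "\<Phi>' = (\<lambda>t. spline_repr (\<lambda>m c. ?B m * (- ?e m * pos_powr (?e m - 1) (c - t))) p n k i)"
  have "integral {t..1} (\<lambda>y. (y - t) powr (1 - \<alpha>) * bspline p n k i y) = \<Phi> t"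
    if t: "t \<in> {0<..<1}" for t
  proof -
    have "((\<lambda>y. spline_repr (\<lambda>m c. (y - t) powr (1 - \<alpha>) * trunc_pow m c y) p n k i) has_integral \<Phi> t) {t..1}"
      unfolding \<Phi>_def using \<alpha> t
      by (intro has_integral_spline_repr[OF n] has_integral_rl_kernel_trunc_pow) (auto simp: repr_node_def)
    then have "((\<lambda>y. (y - t) powr (1 - \<alpha>) * bspline p n k i y) has_integral \<Phi> t) {t..1}"
      by (rule has_integral_eq[rotated]) (use t in \<open>simp add: bspline_eq_spline_repr[OF n] spline_repr_cmult\<close>)
    then show ?thesis by (rule integral_unique)
  qed
  moreover have "(\<Phi> has_real_derivative \<Phi>' t) (at t)" if t: "t \<in> {0<..<1}" for t
    unfolding \<Phi>_def \<Phi>'_def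
  proof (rule has_derivative_spline_repr[OF n])
    fix m c assume "repr_node p n k i m c"
    hence "1 < ?e m \<or> t < c" using t \<alpha> k unfolding repr_node_def by auto
    thus "((\<lambda>t. ?B m * pos_powr (?e m) (c - t)) has_real_derivative ?B m * (- ?e m * pos_powr (?e m - 1) (c - t))) (at t)"
      by (intro DERIV_cmult pos_powr_has_derivative)
  qed
  moreover have "(\<Phi>' has_real_derivative spline_repr (\<lambda>m c. rl_trunc_pow \<alpha> m c x) p n k i) (at x)"
    unfolding \<Phi>'_def
  proof (rule has_derivative_spline_repr[OF n])
    fix m c assume "repr_node p n k i m c"
    hence "1 < ?e m - 1 \<or> x < c" using x \<alpha> k unfolding repr_node_def by auto
    then have "((\<lambda>t. ?B m * (- ?e m * pos_powr (?e m - 1) (c - t))) has_real_derivative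
        ?B m * (- ?e m * (- (?e m - 1) * pos_powr (?e m - 1 - 1) (c - x)))) (at x)"
      by (intro DERIV_cmult pos_powr_has_derivative)
    moreover have "?B m * (- ?e m * (- (?e m - 1) * pos_powr (?e m - 1 - 1) (c - x))) = rl_trunc_pow \<alpha> m c x"
      by (simp add: rl_trunc_pow_def algebra_simps)
    ultimately show "((\<lambda>t. ?B m * (- ?e m * pos_powr (?e m - 1) (c - t))) has_real_derivative
        rl_trunc_pow \<alpha> m c x) (at x)" by simp
  qed
  ultimately have "deriv (deriv (\<lambda>t. integral {t..1} (\<lambda>y. (y - t) powr (1 - \<alpha>) * bspline p n k i y))) x
      = spline_repr (\<lambda>m c. rl_trunc_pow \<alpha> m c x) p n k i"
    by (intro deriv_deriv_eq_locally[of "{0<..<1}"]) (use x in auto)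
  then show ?thesis unfolding rl_right_deriv_def by (simp add: Let_def)
qed

definition kernel_integral :: "real \<Rightarrow> real \<Rightarrow> real \<Rightarrow> nat \<Rightarrow> real \<Rightarrow> real \<Rightarrow> real" where
  "kernel_integral a C e m c t = integral {a..c} (\<lambda>y. C * (y - t) powr e * (c - y) ^ m)"

lemma has_derivative_kernel_integral:
  fixes C e a c t :: real
  assumes "t < a" and "C' = - C * e" "e' = e - 1"
  shows "(kernel_integral a C e m c has_real_derivative kernel_integral a C' e' m c t) (at t)"
proof -
  have U: "t \<in> {..<a}" "convex {..<a::real}" using assms by auto
  have "((\<lambda>t. integral (cbox a c) (\<lambda>y. C * (y - t) powr e * (c - y) ^ m)) has_field_derivative
          integral (cbox a c) (\<lambda>y. (C * - e) * (y - t) powr (e - 1) * (c - y) ^ m)) (at t within {..<a})"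
  proof (rule leibniz_rule_field_derivative[where fx = "\<lambda>t y. (C * - e) * (y - t) powr (e - 1) * (c - y) ^ m"])
    fix t' y :: real assume ty: "t' \<in> {..<a}" "y \<in> cbox a c"
    hence pos: "0 < y - t'" by (auto simp: cbox_interval)
    have "((\<lambda>t. C * (y - t) powr e * (c - y) ^ m) has_field_derivative
            C * (e * (y - t') powr (e - 1) * (0 - 1)) * (c - y) ^ m) (at t')"
      using pos by (auto intro!: derivative_eq_intros)
    hence "((\<lambda>t. C * (y - t) powr e * (c - y) ^ m) has_field_derivative
            (C * - e) * (y - t') powr (e - 1) * (c - y) ^ m) (at t')"
      by (rule DERIV_cong) (simp add: algebra_simps)
    thus "((\<lambda>t. C * (y - t) powr e * (c - y) ^ m) has_field_derivative
            (C * - e) * (y - t') powr (e - 1) * (c - y) ^ m) (at t' within {..<a})"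
      by (rule has_field_derivative_at_within)
  next
    fix t' :: real assume "t' \<in> {..<a}"
    hence "\<forall>y\<in>{a..c}. 0 < y - t'" by auto
    hence "continuous_on {a..c} (\<lambda>y. C * (y - t') powr e * (c - y) ^ m)"
      by (intro continuous_intros continuous_on_powr) auto
    thus "(\<lambda>y. C * (y - t') powr e * (c - y) ^ m) integrable_on cbox a c"
      unfolding cbox_interval by (rule integrable_continuous_interval)
  next
    have "\<forall>z\<in>{..<a} \<times> cbox a c. snd z - fst z \<noteq> 0" by (auto simp: cbox_interval)
    hence "continuous_on ({..<a} \<times> cbox a c) (\<lambda>z. (C * - e) * (snd z - fst z) powr (e - 1) * (c - snd z) ^ m)"
      by (intro continuous_intros continuous_on_powr) auto
    thus "continuous_on ({..<a} \<times> cbox a c) (\<lambda>(t, y). (C * - e) * (y - t) powr (e - 1) * (c - y) ^ m)"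
      by (simp add: case_prod_beta')
  qed (use U in auto)
  moreover have "at t within {..<a} = at t" using U(1) by (intro at_within_open) auto
  ultimately show ?thesis using assms(2,3) by (simp add: cbox_interval kernel_integral_def[abs_def])
qed

lemma has_integral_kernel:
  fixes C e a c t :: real
  assumes "t < a"
  shows "((\<lambda>y. C * (y - t) powr e * (c - y) ^ m) has_integral kernel_integral a C e m c t) {a..c}"
proof -
  have "\<forall>y\<in>{a..c}. 0 < y - t" using assms by auto
  hence "continuous_on {a..c} (\<lambda>y. C * (y - t) powr e * (c - y) ^ m)"
    by (intro continuous_intros continuous_on_powr) auto
  hence "(\<lambda>y. C * (y - t) powr e * (c - y) ^ m) integrable_on {a..c}"
    by (rule integrable_continuous_interval)
  thus ?thesis unfolding kernel_integral_def by (rule integrable_integral)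
qed

lemma has_integral_kernel_bspline:
  assumes n: "1 \<le> n" and t: "t < knot p n i" and pos: "0 < knot p n i"
  shows "((\<lambda>y. C * (y - t) powr e * bspline p n k i y) has_integral
           spline_repr (\<lambda>m c. kernel_integral (knot p n i) C e m c t) p n k i) {knot p n i..1}"
proof -
  have "((\<lambda>y. spline_repr (\<lambda>m c. C * (y - t) powr e * trunc_pow m c y) p n k i) has_integral
           spline_repr (\<lambda>m c. kernel_integral (knot p n i) C e m c t) p n k i) {knot p n i..1}"
    by (intro has_integral_spline_repr[OF n] has_integral_trunc_pow has_integral_kernel t)
       (auto simp: repr_node_def)
  then show ?thesis
    by (rule has_integral_eq[rotated]) (use pos in \<open>simp add: bspline_eq_spline_repr[OF n] spline_repr_cmult\<close>)
qed

text \<open>Left of the support the derivatives may be taken under the integral sign, which produces the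
  hypersingular kernel \<open>(\<alpha> - 1) \<alpha> (y - x)\<^sup>-\<^sup>\<alpha>\<^sup>-\<^sup>1\<close>.\<close>

theorem has_integral_rl_right_deriv_bspline:
  assumes n: "1 \<le> n" and \<alpha>: "\<alpha> < 2" and x: "0 < x" "x < knot p n i"
  shows "((\<lambda>y. (\<alpha> - 1) * \<alpha> * (y - x) powr (- \<alpha> - 1) * bspline p n k i y) has_integral
           Gamma (2 - \<alpha>) * rl_right_deriv \<alpha> (bspline p n k i) x) {knot p n i..1}"
proof -
  let ?a = "knot p n i"
  let ?\<Psi> = "\<lambda>C e t. spline_repr (\<lambda>m c. kernel_integral ?a C e m c t) p n k i"
  have pos: "0 < ?a" using x by simp
  have "integral {t..1} (\<lambda>y. (y - t) powr (1 - \<alpha>) * bspline p n k i y) = ?\<Psi> 1 (1 - \<alpha>) t"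
    if t: "t \<in> {0<..<?a}" for t
  proof -
    have "((\<lambda>y. (y - t) powr (1 - \<alpha>) * bspline p n k i y) has_integral 0) {t..?a}"
      by (rule has_integral_spike[OF negligible_sing[of ?a] _ has_integral_0])
         (use bspline_eq_0_outside[OF n] in auto)
    moreover have "((\<lambda>y. (y - t) powr (1 - \<alpha>) * bspline p n k i y) has_integral ?\<Psi> 1 (1 - \<alpha>) t) {?a..1}"
      using has_integral_kernel_bspline[OF n _ pos, where t=t and C=1 and e="1 - \<alpha>" and k=k] t by simp
    ultimately have "((\<lambda>y. (y - t) powr (1 - \<alpha>) * bspline p n k i y) has_integral (0 + ?\<Psi> 1 (1 - \<alpha>) t)) {t..1}"
      using t knot_le_1[OF n, of p i] by (intro has_integral_combine) auto
    then show ?thesis by (simp add: integral_unique)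
  qed
  moreover have "(?\<Psi> 1 (1 - \<alpha>) has_real_derivative ?\<Psi> (\<alpha> - 1) (- \<alpha>) t) (at t)" if "t \<in> {0<..<?a}" for t
    by (rule has_derivative_spline_repr[OF n], rule has_derivative_kernel_integral) (use that in auto)
  moreover have "(?\<Psi> (\<alpha> - 1) (- \<alpha>) has_real_derivative ?\<Psi> ((\<alpha> - 1) * \<alpha>) (- \<alpha> - 1) x) (at x)"
    by (rule has_derivative_spline_repr[OF n], rule has_derivative_kernel_integral) (use x in \<open>auto simp: algebra_simps\<close>)
  ultimately have "deriv (deriv (\<lambda>t. integral {t..1} (\<lambda>y. (y - t) powr (1 - \<alpha>) * bspline p n k i y))) x
      = ?\<Psi> ((\<alpha> - 1) * \<alpha>) (- \<alpha> - 1) x"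
    by (intro deriv_deriv_eq_locally[of "{0<..<?a}"]) (use x in auto)
  moreover have "Gamma (2 - \<alpha>) \<noteq> 0" using \<alpha> by (intro Gamma_real_pos[THEN less_imp_neq, symmetric]) simp
  ultimately show ?thesis
    using has_integral_kernel_bspline[OF n x(2) pos, where C="(\<alpha> - 1) * \<alpha>" and e="- \<alpha> - 1" and k=k]
    unfolding rl_right_deriv_def by (simp add: Let_def)
qed

section \<open>Matrix norms bounded by row and column sums\<close>

lemma square_sum_le_weighted:
  fixes M x :: "nat \<Rightarrow> real"
  shows "(\<Sum>j\<in>J. M j * x j)\<^sup>2 \<le> (\<Sum>j\<in>J. \<bar>M j\<bar>) * (\<Sum>j\<in>J. \<bar>M j\<bar> * (x j)\<^sup>2)"
proof -
  have "\<bar>\<Sum>j\<in>J. M j * x j\<bar> \<le> (\<Sum>j\<in>J. sqrt \<bar>M j\<bar> * (sqrt \<bar>M j\<bar> * \<bar>x j\<bar>))"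
    by (rule order.trans[OF sum_abs]) (simp add: abs_mult mult.assoc[symmetric])
  hence "(\<Sum>j\<in>J. M j * x j)\<^sup>2 \<le> (\<Sum>j\<in>J. sqrt \<bar>M j\<bar> * (sqrt \<bar>M j\<bar> * \<bar>x j\<bar>))\<^sup>2"
    by (metis abs_ge_zero power2_abs power_mono)
  also have "\<dots> \<le> (\<Sum>j\<in>J. (sqrt \<bar>M j\<bar>)\<^sup>2) * (\<Sum>j\<in>J. (sqrt \<bar>M j\<bar> * \<bar>x j\<bar>)\<^sup>2)"
    by (rule Cauchy_Schwarz_ineq_sum)
  also have "\<dots> = (\<Sum>j\<in>J. \<bar>M j\<bar>) * (\<Sum>j\<in>J. \<bar>M j\<bar> * (x j)\<^sup>2)"
    by (simp add: power_mult_distrib)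
  finally show ?thesis .
qed

lemma mat_norm_1_le:
  assumes "1 \<le> m" and "\<And>j. j \<in> {1..m} \<Longrightarrow> (\<Sum>i=1..m. \<bar>M i j\<bar>) \<le> S"
  shows "mat_norm_1 m M \<le> S"
  unfolding mat_norm_1_def using assms by (intro Max.boundedI) auto

lemma mat_norm_inf_le:
  assumes "1 \<le> m" and "\<And>i. i \<in> {1..m} \<Longrightarrow> (\<Sum>j=1..m. \<bar>M i j\<bar>) \<le> S"
  shows "mat_norm_inf m M \<le> S"
  unfolding mat_norm_inf_def using assms by (intro Max.boundedI) auto

text \<open>Schur's test: \<open>\<parallel>M\<parallel>\<^sub>2\<^sup>2 \<le> \<parallel>M\<parallel>\<^sub>1 \<parallel>M\<parallel>\<^sub>\<infinity>\<close>, via Cauchy--Schwarz with the weights \<open>\<bar>M i j\<bar>\<close>.\<close>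

lemma mat_norm_2_le:
  fixes M :: "nat \<Rightarrow> nat \<Rightarrow> real"
  assumes m: "1 \<le> m"
    and row: "\<And>i. i \<in> {1..m} \<Longrightarrow> (\<Sum>j=1..m. \<bar>M i j\<bar>) \<le> S"
    and col: "\<And>j. j \<in> {1..m} \<Longrightarrow> (\<Sum>i=1..m. \<bar>M i j\<bar>) \<le> S"
  shows "mat_norm_2 m M \<le> S"
  unfolding mat_norm_2_def
proof (rule cSUP_least)
  have "(\<Sum>j = 1..m. (if j = 1 then 1 else 0 :: real)\<^sup>2) = (\<Sum>j = 1..m. if j = 1 then 1 else 0)"
    by (rule sum.cong) auto
  also have "\<dots> = 1" using m by simp
  finally have "(\<lambda>j. if j = 1 then 1 else 0 :: real) \<in> {x. (\<Sum>j = 1..m. (x j)\<^sup>2) = 1}" by simp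
  then show "{x::nat\<Rightarrow>real. (\<Sum>j = 1..m. (x j)\<^sup>2) = 1} \<noteq> {}" by (metis empty_iff)
next
  fix x :: "nat \<Rightarrow> real" assume "x \<in> {x. (\<Sum>j = 1..m. (x j)\<^sup>2) = 1}"
  hence x1: "(\<Sum>j = 1..m. (x j)\<^sup>2) = 1" by simp
  have "(\<Sum>i = 1..m. \<bar>M i 1\<bar>) \<le> S" using col m by simp
  then have S0: "0 \<le> S" by (rule order_trans[OF sum_nonneg, rotated]) simp
  have "(\<Sum>i = 1..m. (\<Sum>j = 1..m. M i j * x j)\<^sup>2) \<le> (\<Sum>i = 1..m. S * (\<Sum>j = 1..m. \<bar>M i j\<bar> * (x j)\<^sup>2))"
  proof (rule sum_mono)
    fix i assume i: "i \<in> {1..m}"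
    have "(\<Sum>j = 1..m. M i j * x j)\<^sup>2 \<le> (\<Sum>j=1..m. \<bar>M i j\<bar>) * (\<Sum>j = 1..m. \<bar>M i j\<bar> * (x j)\<^sup>2)"
      by (rule square_sum_le_weighted)
    also have "\<dots> \<le> S * (\<Sum>j = 1..m. \<bar>M i j\<bar> * (x j)\<^sup>2)"
      by (rule mult_right_mono[OF row[OF i]]) (simp add: sum_nonneg)
    finally show "(\<Sum>j = 1..m. M i j * x j)\<^sup>2 \<le> S * (\<Sum>j = 1..m. \<bar>M i j\<bar> * (x j)\<^sup>2)" .
  qed
  also have "\<dots> = S * (\<Sum>j = 1..m. (\<Sum>i = 1..m. \<bar>M i j\<bar>) * (x j)\<^sup>2)"
  proof -
    have "(\<Sum>i = 1..m. \<Sum>j = 1..m. \<bar>M i j\<bar> * (x j)\<^sup>2) = (\<Sum>j = 1..m. \<Sum>i = 1..m. \<bar>M i j\<bar> * (x j)\<^sup>2)"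
      by (rule sum.swap)
    then show ?thesis by (simp only: sum_distrib_left[symmetric] sum_distrib_right[symmetric])
  qed
  also have "\<dots> \<le> S * (\<Sum>j = 1..m. S * (x j)\<^sup>2)"
    by (intro mult_left_mono[OF sum_mono S0] mult_right_mono col) auto
  also have "\<dots> = S * S" by (simp only: sum_distrib_left[symmetric] x1 mult_1_right)
  finally have "sqrt (\<Sum>i = 1..m. (\<Sum>j = 1..m. M i j * x j)\<^sup>2) \<le> sqrt (S\<^sup>2)"
    unfolding power2_eq_square[of S] by (rule real_sqrt_le_mono)
  then show "sqrt (\<Sum>i = 1..m. (\<Sum>j = 1..m. M i j * x j)\<^sup>2) \<le> S" using S0 by simp
qed

section \<open>Greville abscissae\<close>

lemma greville_Suc_eq: "greville p n (Suc i) = (\<Sum>k=i+2..i+p+1. knot p n k) / real p"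
  unfolding greville_def by (simp add: add.commute add.left_commute)

lemma knot_le_greville:
  assumes n: "1 \<le> n" and p: "1 \<le> p"
  shows "knot p n (i+2) \<le> greville p n (Suc i)"
proof -
  have "(\<Sum>k=i+2..i+p+1. knot p n (i+2)) \<le> (\<Sum>k=i+2..i+p+1. knot p n k)"
    by (rule sum_mono) (auto intro: knot_mono[OF n])
  thus ?thesis using p by (simp add: greville_Suc_eq field_simps)
qed

lemma greville_le_knot:
  assumes n: "1 \<le> n" and p: "1 \<le> p"
  shows "greville p n (Suc i) \<le> knot p n (i+p+1)"
proof -
  have "(\<Sum>k=i+2..i+p+1. knot p n k) \<le> (\<Sum>k=i+2..i+p+1. knot p n (i+p+1))"
    by (rule sum_mono) (auto intro: knot_mono[OF n])
  thus ?thesis using p by (simp add: greville_Suc_eq field_simps)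
qed

lemma greville_pos:
  assumes n: "1 \<le> n" and p: "1 \<le> p" and i: "1 \<le> i"
  shows "0 < greville p n (Suc i)"
proof -
  have "0 < 1 / real n" using n by simp
  also have "1 / real n = knot p n (p+2)" using n by (simp add: knot_eq_min)
  also have "\<dots> \<le> knot p n (i+p+1)" using i by (intro knot_mono[OF n]) auto
  also have "\<dots> \<le> (\<Sum>k=i+2..i+p+1. knot p n k)"
    by (rule member_le_sum) (use p in \<open>auto simp: knot_nonneg\<close>)
  finally show ?thesis using p by (simp add: greville_Suc_eq)
qed

lemma greville_le_1_minus:
  assumes n: "1 \<le> n" and p: "1 \<le> p" and i: "i \<le> n + p - 2"
  shows "greville p n (Suc i) \<le> 1 - 1 / (real n * real p)"
proof -
  have np: "real n > 0" using n by simp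
  have "min n (i + 2 - Suc p) \<le> n - 1" using i p n by (simp add: min_def, arith)
  hence a: "knot p n (i+2) \<le> 1 - 1 / real n"
    using n np by (simp add: knot_eq_min field_simps of_nat_diff)
  have "(\<Sum>k=i+2..i+p+1. knot p n k) = knot p n (i+2) + (\<Sum>k=i+3..i+p+1. knot p n k)"
    using p by (subst sum.atLeast_Suc_atMost) (auto simp: numeral_3_eq_3)
  also have "(\<Sum>k=i+3..i+p+1. knot p n k) \<le> (\<Sum>k=i+3..i+p+1. 1)"
    by (rule sum_mono) (simp add: knot_le_1[OF n])
  also have "(\<Sum>k=i+3..i+p+1. (1::real)) = real p - 1" using p by simp
  finally have "(\<Sum>k=i+2..i+p+1. knot p n k) \<le> real p - 1 / real n" using a by simp
  hence "(\<Sum>k=i+2..i+p+1. knot p n k) / real p \<le> (real p - 1 / real n) / real p"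
    using p by (simp add: divide_right_mono)
  also have "\<dots> = 1 - 1 / (real n * real p)" using p np by (simp add: field_simps)
  finally show ?thesis by (simp add: greville_Suc_eq)
qed

lemma greville_in_unit:
  assumes n: "1 \<le> n" and p: "1 \<le> p" and i: "1 \<le> i" "i \<le> n + p - 2"
  shows "0 < greville p n (Suc i)" "greville p n (Suc i) < 1"
    "1 / (real n * real p) \<le> 1 - greville p n (Suc i)"
proof -
  show "0 < greville p n (Suc i)" using greville_pos[OF n p i(1)] .
  have "0 < 1 / (real n * real p)" using n p by simp
  with greville_le_1_minus[OF n p i(2)]
  show "greville p n (Suc i) < 1" "1 / (real n * real p) \<le> 1 - greville p n (Suc i)" by linarith+
qed

lemma knot_minus_greville_ge:
  assumes n: "1 \<le> n" and p: "1 \<le> p" and j: "j \<le> n + p - 2"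
  shows "(real j - real p - real i) / real n \<le> knot p n (j+1) - greville p n (Suc i)"
proof -
  have np: "real n > 0" using n by simp
  have "real (j+1) - real p - 1 \<le> knot p n (j+1) * n" by (rule knot_times_n_ge[OF n]) (use j in simp)
  moreover have "knot p n (i+p+1) * n \<le> real i"
    using knot_times_n_le[OF n, of p "i+p+1"] by auto
  moreover have "greville p n (Suc i) * n \<le> knot p n (i+p+1) * n"
    using greville_le_knot[OF n p, of i] np by (simp add: mult_right_mono)
  ultimately have "real j - real p - real i \<le> (knot p n (j+1) - greville p n (Suc i)) * n"
    by (simp add: algebra_simps)
  thus ?thesis using np by (simp add: field_simps)
qed

lemma greville_minus_knot_ge:
  assumes n: "1 \<le> n" and p: "1 \<le> p" and i: "i \<le> n + p - 2"
  shows "(real i - real j - real p) / real n \<le> greville p n (Suc i) - knot p n (j+p+2)"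
proof -
  have np: "real n > 0" using n by simp
  have "real (i+2) - real p - 1 \<le> knot p n (i+2) * n" by (rule knot_times_n_ge[OF n]) (use i p in simp)
  moreover have "knot p n (j+p+2) * n \<le> real j + 1"
    using knot_times_n_le[OF n, of p "j+p+2"] by auto
  moreover have "knot p n (i+2) * n \<le> greville p n (Suc i) * n"
    using knot_le_greville[OF n p, of i] np by (simp add: mult_right_mono)
  ultimately have "real i - real j - real p \<le> (greville p n (Suc i) - knot p n (j+p+2)) * n"
    by (simp add: algebra_simps)
  thus ?thesis using np by (simp add: field_simps)
qed

section \<open>Entries of the matrix\<close>

lemma powr_le_power:
  fixes c a :: real
  assumes "1 \<le> c" "a \<le> real k"
  shows "c powr a \<le> c ^ k"
  using powr_mono[OF assms(2,1)] assms(1) by (simp add: powr_realpow)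

lemma pos_powr_le:
  assumes "z \<le> B" "0 \<le> e" "0 < B"
  shows "pos_powr e z \<le> B powr e"
  using assms by (auto simp: pos_powr_def intro: powr_mono2)

lemma A_R_eq_rl_trunc_pow:
  assumes n: "1 \<le> n" and p: "2 \<le> p" and \<alpha>: "\<alpha> < 2" and i: "1 \<le> i" "i \<le> n + p - 2"
  shows "A_R \<alpha> p n i j =
    spline_repr (\<lambda>m c. rl_trunc_pow \<alpha> m c (greville p n (Suc i))) p n p (Suc j) / Gamma (2 - \<alpha>)"
  using rl_right_deriv_bspline[OF n p \<alpha> greville_in_unit(1,2)[OF n _ i]] p by (simp add: A_R_def)

lemma A_R_eq_0:
  assumes n: "1 \<le> n" and p: "2 \<le> p" and \<alpha>: "\<alpha> < 2"
    and i: "1 \<le> i" "i \<le> n + p - 2" and ij: "j + p \<le> i"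
  shows "A_R \<alpha> p n i j = 0"
proof -
  define x where "x = greville p n (Suc i)"
  have "(real i - real j - real p) / real n \<le> x - knot p n (j+p+2)"
    unfolding x_def by (rule greville_minus_knot_ge[OF n _ i(2)]) (use p in simp)
  moreover have "0 \<le> (real i - real j - real p) / real n" using ij by simp
  ultimately have right: "knot p n (Suc j + p + 1) \<le> x" by simp
  have interior: "rl_trunc_pow \<alpha> p (knot p n r) x = 0" if "r \<le> Suc j + p + 1" for r
  proof -
    have "knot p n r \<le> x" using knot_mono[OF n that, where p=p] right by linarith
    then show ?thesis by (simp add: rl_trunc_pow_def pos_powr_def)
  qed
  have "end_coeff p n p (Suc j) q * rl_trunc_pow \<alpha> q 1 x = 0" for q
    using end_coeff_nonzero_imp[OF n, of p p "Suc j" q] right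
    by (auto simp: rl_trunc_pow_def pos_powr_def)
  then have "end_part (\<lambda>m c. rl_trunc_pow \<alpha> m c x) p n p (Suc j) = 0"
    unfolding end_part_def by (intro sum.neutral) blast
  moreover have "interior_part (\<lambda>m c. rl_trunc_pow \<alpha> m c x) p n p (Suc j) = 0"
    unfolding interior_part_def by (rule sum.neutral) (use interior in auto)
  ultimately have "spline_repr (\<lambda>m c. rl_trunc_pow \<alpha> m c x) p n p (Suc j) = 0"
    unfolding spline_repr_def by simp
  then show ?thesis unfolding A_R_eq_rl_trunc_pow[OF n p \<alpha> i] x_def by simp
qed

definition rl_coeff_bound :: "real \<Rightarrow> nat \<Rightarrow> real" where
  "rl_coeff_bound \<alpha> p = (\<Sum>q\<le>p. \<bar>Beta (2 - \<alpha>) (real q + 1) * (real q + 2 - \<alpha>) * (real q + 1 - \<alpha>)\<bar>)"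

lemma rl_coeff_bound_nonneg: "0 \<le> rl_coeff_bound \<alpha> p"
  unfolding rl_coeff_bound_def by (simp add: sum_nonneg)

lemma abs_rl_trunc_pow_le:
  assumes "q \<le> p"
  shows "\<bar>rl_trunc_pow \<alpha> q c x\<bar> \<le> rl_coeff_bound \<alpha> p * pos_powr (real q - \<alpha>) (c - x)"
proof -
  have "\<bar>Beta (2 - \<alpha>) (real q + 1) * (real q + 2 - \<alpha>) * (real q + 1 - \<alpha>)\<bar> \<le> rl_coeff_bound \<alpha> p"
    unfolding rl_coeff_bound_def using assms by (intro member_le_sum) auto
  then show ?thesis unfolding rl_trunc_pow_def abs_mult[of _ "pos_powr _ _"]
    by (simp add: pos_powr_nonneg mult_right_mono)
qed

text \<open>Near the diagonal \<open>(c - x)\<^sub>+\<^sup>q\<^sup>-\<^sup>\<alpha>\<close> is evaluated at \<open>c - x \<le> 2p/n\<close>, which together with the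
  scaling \<open>n\<^sup>-\<^sup>\<alpha>\<close> compensates the size \<open>O(n\<^sup>q)\<close> of its coefficient; when \<open>q < \<alpha>\<close> this also
  needs \<open>1 - x \<ge> 1/(n p)\<close>.\<close>

lemma near_interior_term_le:
  assumes n: "1 \<le> n" and p: "2 \<le> p" and \<alpha>: "0 \<le> \<alpha>" "\<alpha> < 2"
    and r: "interior_knot p n r" "J \<le> r" "r \<le> J+p+1"
    and close: "knot p n (J+p+1) - x \<le> 2 * real p / real n"
  shows "real n powr (- \<alpha>) * \<bar>trunc_coeff p n p J r * rl_trunc_pow \<alpha> p (knot p n r) x\<bar>
    \<le> real (p+1) * rl_coeff_bound \<alpha> p * (2 * real p) ^ p"
proof -
  define N where "N = real n"
  have N0: "0 < N" using n by (simp add: N_def)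
  have K0: "0 \<le> rl_coeff_bound \<alpha> p" by (rule rl_coeff_bound_nonneg)
  have a: "\<bar>trunc_coeff p n p J r\<bar> \<le> real (p+1) * N ^ p"
    using abs_trunc_coeff_le[OF n r] by (simp add: N_def)
  have "knot p n r \<le> knot p n (J+p+1)" using r by (intro knot_mono[OF n])
  with close have "pos_powr (real p - \<alpha>) (knot p n r - x) \<le> (2 * real p / N) powr (real p - \<alpha>)"
    using \<alpha> p N0 by (intro pos_powr_le) (auto simp: N_def)
  then have f: "\<bar>rl_trunc_pow \<alpha> p (knot p n r) x\<bar> \<le> rl_coeff_bound \<alpha> p * (2 * real p / N) powr (real p - \<alpha>)"
    by (rule order_trans[OF abs_rl_trunc_pow_le[OF order_refl] mult_left_mono[OF _ K0]])
  have "N powr (- \<alpha>) * \<bar>trunc_coeff p n p J r * rl_trunc_pow \<alpha> p (knot p n r) x\<bar>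
      \<le> N powr (- \<alpha>) * (real (p+1) * N ^ p * (rl_coeff_bound \<alpha> p * (2 * real p / N) powr (real p - \<alpha>)))"
    unfolding abs_mult by (intro mult_left_mono mult_mono a f) (use N0 in auto)
  also have "\<dots> = real (p+1) * rl_coeff_bound \<alpha> p * (N powr (- \<alpha>) * N powr real p * (2 * real p / N) powr (real p - \<alpha>))"
    using N0 by (simp add: powr_realpow)
  also have "N powr (- \<alpha>) * N powr real p * (2 * real p / N) powr (real p - \<alpha>) = (2 * real p) powr (real p - \<alpha>)"
    using N0 p by (simp add: powr_divide powr_add[symmetric] powr_diff)
  also have "(2 * real p) powr (real p - \<alpha>) \<le> (2 * real p) ^ p"
    using p \<alpha> by (intro powr_le_power) auto
  finally show ?thesis using K0 by (simp add: N_def mult_left_mono)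
qed


lemma near_end_term_le:
  assumes n: "1 \<le> n" and p: "2 \<le> p" and \<alpha>: "0 \<le> \<alpha>" "\<alpha> < 2" and q: "q \<le> p"
    and x: "x < 1" "1 / (real n * real p) \<le> 1 - x"
    and close: "knot p n (J+p+1) - x \<le> 2 * real p / real n"
  shows "real n powr (- \<alpha>) * \<bar>end_coeff p n p J q * rl_trunc_pow \<alpha> q 1 x\<bar>
    \<le> 3 ^ p * rl_coeff_bound \<alpha> p * (2 * real p) ^ p * real p ^ 2"
proof (cases "end_coeff p n p J q = 0")
  case True
  then show ?thesis using rl_coeff_bound_nonneg[of \<alpha> p] by simp
next
  case False
  define N where "N = real n"
  have N0: "0 < N" and p0: "1 \<le> real p" using n p by (auto simp: N_def)
  have K0: "0 \<le> rl_coeff_bound \<alpha> p" by (rule rl_coeff_bound_nonneg)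
  have x1: "0 < 1 - x" using x by simp
  have "knot p n (J + p + 1) = 1" using end_coeff_nonzero_imp[OF n False] by simp
  with close have far: "1 - x \<le> 2 * real p / N" by (simp add: N_def)
  have b: "\<bar>end_coeff p n p J q\<bar> \<le> 3 ^ p * N ^ q" using abs_end_coeff_le[OF n] by (simp add: N_def)
  have "pos_powr (real q - \<alpha>) (1 - x) = (1 - x) ^ q * (1 - x) powr (- \<alpha>)"
    using x1 by (simp add: pos_powr_def powr_add[symmetric] powr_realpow[symmetric])
  also have "\<dots> \<le> (2 * real p / N) ^ q * (1 / (N * real p)) powr (- \<alpha>)"
    using x(2) far x1 \<alpha> N0 p0 by (intro mult_mono power_mono powr_mono2') (auto simp: N_def)
  finally have "\<bar>rl_trunc_pow \<alpha> q 1 x\<bar> \<le> rl_coeff_bound \<alpha> p * ((2 * real p / N) ^ q * (1 / (N * real p)) powr (- \<alpha>))"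
    by (rule order_trans[OF abs_rl_trunc_pow_le[OF q] mult_left_mono[OF _ K0]])
  then have "N powr (- \<alpha>) * \<bar>end_coeff p n p J q * rl_trunc_pow \<alpha> q 1 x\<bar>
      \<le> N powr (- \<alpha>) * (3 ^ p * N ^ q * (rl_coeff_bound \<alpha> p * ((2 * real p / N) ^ q * (1 / (N * real p)) powr (- \<alpha>))))"
    unfolding abs_mult by (intro mult_left_mono mult_mono b) (use N0 in auto)
  also have "\<dots> = 3 ^ p * rl_coeff_bound \<alpha> p * ((N ^ q * (2 * real p / N) ^ q) * (N powr (- \<alpha>) * (1 / (N * real p)) powr (- \<alpha>)))"
    by (simp only: mult_ac)
  also have "\<dots> = 3 ^ p * rl_coeff_bound \<alpha> p * ((2 * real p) ^ q * real p powr \<alpha>)"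
    using N0 p0 by (simp add: power_divide powr_divide powr_mult powr_minus_divide powr_add[symmetric])
  also have "\<dots> \<le> 3 ^ p * rl_coeff_bound \<alpha> p * ((2 * real p) ^ p * real p ^ 2)"
    using q p0 \<alpha> K0 by (intro mult_left_mono mult_mono power_increasing powr_le_power) auto
  finally show ?thesis by (simp add: N_def mult_ac)
qed

definition near_const :: "real \<Rightarrow> nat \<Rightarrow> real" where
  "near_const \<alpha> p = (real (p+2) * (real (p+1) * rl_coeff_bound \<alpha> p * (2 * real p) ^ p)
     + real (p+1) * (3 ^ p * rl_coeff_bound \<alpha> p * (2 * real p) ^ p * real p ^ 2)) / Gamma (2 - \<alpha>)"

lemma near_const_nonneg: "\<alpha> < 2 \<Longrightarrow> 0 \<le> near_const \<alpha> p"
  unfolding near_const_def using rl_coeff_bound_nonneg[of \<alpha> p] Gamma_real_pos[of "2 - \<alpha>"]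
  by (intro divide_nonneg_pos add_nonneg_nonneg mult_nonneg_nonneg) auto

lemma abs_A_R_near_le:
  assumes n: "1 \<le> n" and p: "2 \<le> p" and \<alpha>: "0 \<le> \<alpha>" "\<alpha> < 2"
    and i: "1 \<le> i" "i \<le> n + p - 2" and ij: "j \<le> i + p"
  shows "real n powr (- \<alpha>) * \<bar>A_R \<alpha> p n i j\<bar> \<le> near_const \<alpha> p"
proof -
  define x where "x = greville p n (Suc i)"
  define J where "J = Suc j"
  let ?K = "rl_coeff_bound \<alpha> p"
  have x: "x < 1" "1 / (real n * real p) \<le> 1 - x" using greville_in_unit[OF n _ i] p by (auto simp: x_def)
  have G0: "0 < Gamma (2 - \<alpha>)" using \<alpha> by (intro Gamma_real_pos) simp
  have "(real i - real j - real p) / real n \<le> x - knot p n (j+p+2)"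
    unfolding x_def by (rule greville_minus_knot_ge[OF n _ i(2)]) (use p in simp)
  moreover have "(real j + real p - real i) / real n \<le> 2 * real p / real n"
    using ij n by (intro divide_right_mono) auto
  ultimately have close: "knot p n (J+p+1) - x \<le> 2 * real p / real n"
    unfolding J_def by (simp add: diff_divide_distrib add_divide_distrib)
  have "real n powr (- \<alpha>) * \<bar>spline_repr (\<lambda>m c. rl_trunc_pow \<alpha> m c x) p n p J\<bar>
      \<le> (\<Sum>r=J..J+p+1. real n powr (- \<alpha>) * \<bar>if interior_knot p n r then trunc_coeff p n p J r * rl_trunc_pow \<alpha> p (knot p n r) x else 0\<bar>)
       + (\<Sum>q\<le>p. real n powr (- \<alpha>) * \<bar>end_coeff p n p J q * rl_trunc_pow \<alpha> q 1 x\<bar>)"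
    unfolding spline_repr_def interior_part_def end_part_def sum_distrib_left[symmetric] distrib_left[symmetric]
    by (intro mult_left_mono order.trans[OF abs_triangle_ineq add_mono[OF sum_abs sum_abs]]) auto
  also have "\<dots> \<le> (\<Sum>r=J..J+p+1. real (p+1) * ?K * (2 * real p) ^ p)
       + (\<Sum>q\<le>p. 3 ^ p * ?K * (2 * real p) ^ p * real p ^ 2)"
    using near_interior_term_le[OF n p \<alpha> _ _ _ close] near_end_term_le[OF n p \<alpha> _ x close]
      rl_coeff_bound_nonneg[of \<alpha> p]
    by (intro add_mono sum_mono) auto
  also have "\<dots> = near_const \<alpha> p * Gamma (2 - \<alpha>)"
    using G0 by (simp add: near_const_def)
  finally show ?thesis
    using G0 by (simp add: A_R_eq_rl_trunc_pow[OF n p \<alpha>(2) i] x_def J_def pos_divide_le_eq)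
qed

text \<open>Away from the diagonal the integrand of the hypersingular representation is bounded by
  \<open>(\<alpha> - 1) \<alpha> d\<^sup>-\<^sup>\<alpha>\<^sup>-\<^sup>1 2\<^sup>k\<close> on a support of length \<open>(k + 1)/n\<close>.\<close>

lemma abs_rl_right_deriv_bspline_le:
  assumes n: "1 \<le> n" and \<alpha>: "1 < \<alpha>" "\<alpha> < 2" and x: "0 < x"
    and d: "0 < d" "d \<le> knot p n J - x"
  shows "Gamma (2 - \<alpha>) * \<bar>rl_right_deriv \<alpha> (bspline p n k J) x\<bar>
    \<le> (\<alpha> - 1) * \<alpha> * d powr (- \<alpha> - 1) * 2 ^ k * (real (k+1) / real n)"
proof -
  define a where "a = knot p n J"
  define b where "b = knot p n (J+k+1)"
  define f where "f = (\<lambda>y. (\<alpha> - 1) * \<alpha> * (y - x) powr (- \<alpha> - 1) * bspline p n k J y)"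
  define B where "B = (\<alpha> - 1) * \<alpha> * d powr (- \<alpha> - 1) * 2 ^ k"
  have G0: "0 < Gamma (2 - \<alpha>)" using \<alpha> by (intro Gamma_real_pos) simp
  have W: "(f has_integral Gamma (2 - \<alpha>) * rl_right_deriv \<alpha> (bspline p n k J) x) {a..1}"
    unfolding f_def a_def using d by (intro has_integral_rl_right_deriv_bspline[OF n \<alpha>(2) x]) simp
  have ab: "a \<le> b" "b \<le> 1" using knot_mono[OF n] knot_le_1[OF n] by (auto simp: a_def b_def)
  have "(f has_integral 0) {b..1}"
    by (rule has_integral_is_0) (use bspline_eq_0_outside[OF n] in \<open>simp add: f_def b_def\<close>)
  moreover have fint: "f integrable_on {a..b}"
    by (rule integrable_subinterval_real[OF has_integral_integrable[OF W]]) (use ab in auto)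
  ultimately have "(f has_integral (integral {a..b} f + 0)) {a..1}"
    by (intro has_integral_combine[OF ab]) auto
  then have WI: "Gamma (2 - \<alpha>) * rl_right_deriv \<alpha> (bspline p n k J) x = integral {a..b} f"
    using W by (simp add: has_integral_unique)
  have B0: "0 \<le> B" using \<alpha> by (simp add: B_def)
  have fB: "norm (f y) \<le> B" if y: "y \<in> cbox a b" for y
  proof -
    have "(y - x) powr (- \<alpha> - 1) \<le> d powr (- \<alpha> - 1)"
      by (rule powr_mono2') (use y d \<alpha> in \<open>auto simp: a_def cbox_interval\<close>)
    then have "(y - x) powr (- \<alpha> - 1) * \<bar>bspline p n k J y\<bar> \<le> d powr (- \<alpha> - 1) * 2 ^ k"
      by (intro mult_mono abs_bspline_le[OF n]) auto
    then show ?thesis using \<alpha>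
      by (simp add: f_def B_def abs_mult mult.assoc mult_left_mono)
  qed
  have "Gamma (2 - \<alpha>) * \<bar>rl_right_deriv \<alpha> (bspline p n k J) x\<bar> = norm (integral {a..b} f)"
    using G0 by (simp add: WI[symmetric] abs_mult)
  also have "\<dots> \<le> B * Henstock_Kurzweil_Integration.content (cbox a b)"
    by (rule has_integral_bound[OF B0 _ fB]) (use integrable_integral[OF fint] in \<open>simp add: cbox_interval\<close>)
  also have "\<dots> = B * (b - a)" using ab by (simp add: cbox_interval)
  also have "\<dots> \<le> B * (real (k+1) / real n)"
    using knot_diff_le[OF n, of J "J+k+1" p] by (intro mult_left_mono B0) (simp add: a_def b_def)
  finally show ?thesis by (simp add: B_def)
qed

definition far_const :: "real \<Rightarrow> nat \<Rightarrow> real" where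
  "far_const \<alpha> p = (\<alpha> - 1) * \<alpha> * 2 ^ p * real (p+1) / Gamma (2 - \<alpha>)"

lemma far_const_nonneg: "1 < \<alpha> \<Longrightarrow> \<alpha> < 2 \<Longrightarrow> 0 \<le> far_const \<alpha> p"
  unfolding far_const_def using Gamma_real_pos[of "2 - \<alpha>"]
  by (intro divide_nonneg_pos mult_nonneg_nonneg) auto

lemma abs_A_R_far_le:
  assumes n: "1 \<le> n" and p: "2 \<le> p" and \<alpha>: "1 < \<alpha>" "\<alpha> < 2"
    and i: "1 \<le> i" "i \<le> n + p - 2" and j: "j \<le> n + p - 2" and ij: "i + p < j"
  shows "real n powr (- \<alpha>) * \<bar>A_R \<alpha> p n i j\<bar> \<le> far_const \<alpha> p * real (j - i - p) powr (- \<alpha> - 1)"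
proof -
  define x where "x = greville p n (Suc i)"
  define N where "N = real n"
  define e where "e = real (j - i - p)"
  have N0: "0 < N" using n by (simp add: N_def)
  have G0: "0 < Gamma (2 - \<alpha>)" using \<alpha> by (intro Gamma_real_pos) simp
  have e1: "1 \<le> e" using ij by (simp add: e_def)
  have "(real j - real p - real i) / real n \<le> knot p n (Suc j) - x"
    unfolding x_def using knot_minus_greville_ge[OF n _ j] p by simp
  moreover have "real j - real p - real i = e" using ij by (simp add: e_def)
  ultimately have "e / N \<le> knot p n (Suc j) - x" by (simp add: N_def)
  then have "Gamma (2 - \<alpha>) * \<bar>A_R \<alpha> p n i j\<bar>
      \<le> (\<alpha> - 1) * \<alpha> * (e / N) powr (- \<alpha> - 1) * 2 ^ p * (real (p+1) / N)"
    unfolding A_R_def x_def N_def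
    using abs_rl_right_deriv_bspline_le[OF n \<alpha> greville_pos[OF n _ i(1)]] e1 N0 p by (simp add: N_def)
  also have "\<dots> = (\<alpha> - 1) * \<alpha> * 2 ^ p * real (p+1) * e powr (- \<alpha> - 1) * N powr \<alpha>"
    using N0 e1 by (simp add: powr_divide powr_diff powr_minus field_simps)
  finally have "N powr (- \<alpha>) * \<bar>A_R \<alpha> p n i j\<bar> \<le> (\<alpha> - 1) * \<alpha> * 2 ^ p * real (p+1) * e powr (- \<alpha> - 1) / Gamma (2 - \<alpha>)"
    using G0 N0 by (simp add: field_simps powr_minus)
  then show ?thesis by (simp add: far_const_def e_def N_def)
qed

lemma abs_scaled_A_R_le:
  assumes n: "1 \<le> n" and p: "2 \<le> p" and \<alpha>: "1 < \<alpha>" "\<alpha> < 2"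
    and i: "i \<in> {1..n+p-2}" and j: "j \<in> {1..n+p-2}"
  shows "\<bar>real n powr (- \<alpha>) * A_R \<alpha> p n i j\<bar>
    \<le> (if j \<le> i + p \<and> i \<le> j + p then near_const \<alpha> p else 0)
       + far_const \<alpha> p * real (j - i - p) powr (- \<alpha> - 1)"
proof -
  have near0: "0 \<le> near_const \<alpha> p" by (rule near_const_nonneg[OF \<alpha>(2)])
  have far0: "0 \<le> far_const \<alpha> p * real (j - i - p) powr (- \<alpha> - 1)"
    using far_const_nonneg[OF \<alpha>] by simp
  consider "j + p \<le> i" | "i + p < j" | "j \<le> i + p" "i < j + p" by linarith
  then show ?thesis
  proof cases
    case 1
    then show ?thesis using A_R_eq_0[OF n p \<alpha>(2), of i j] i near0 far0 by auto
  next
    case 2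
    then show ?thesis using abs_A_R_far_le[OF n p \<alpha>, of i j] i j by (simp add: abs_mult)
  next
    case 3
    then show ?thesis using abs_A_R_near_le[OF n p _ \<alpha>(2), of i j] i \<alpha> far0 by (simp add: abs_mult)
  qed
qed

lemma sum_band_le:
  fixes c :: real
  assumes "0 \<le> c"
  shows "(\<Sum>i=1..m. if j \<le> i + p \<and> i \<le> j + p then c else 0) \<le> real (2 * p + 1) * c"
proof -
  have "(\<Sum>i=1..m. if j \<le> i + p \<and> i \<le> j + p then c else 0)
      = real (card {i\<in>{1..m}. j \<le> i + p \<and> i \<le> j + p}) * c"
    by (simp add: sum.inter_filter[symmetric])
  also have "card {i\<in>{1..m}. j \<le> i + p \<and> i \<le> j + p} \<le> card {j - p..j + p}"
    by (intro card_mono) auto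
  then have "real (card {i\<in>{1..m}. j \<le> i + p \<and> i \<le> j + p}) * c \<le> real (2 * p + 1) * c"
    using assms by (intro mult_right_mono) auto
  finally show ?thesis .
qed

lemma sum_diff_le_suminf:
  fixes f :: "nat \<Rightarrow> real"
  assumes f0: "f 0 = 0" and nonneg: "\<And>d. 0 \<le> f d" and f: "summable f"
  shows "(\<Sum>j=1..m. f (j - c)) \<le> suminf f" and "(\<Sum>i=1..m. f (c - i)) \<le> suminf f"
proof -
  have le: "(\<Sum>s\<in>S. f (g s)) \<le> suminf f" if "finite S" "inj_on g S" for S and g :: "nat \<Rightarrow> nat"
  proof -
    have "(\<Sum>s\<in>S. f (g s)) = (\<Sum>d\<in>g ` S. f d)" using that(2) by (simp add: sum.reindex)
    also have "\<dots> \<le> suminf f" by (rule sum_le_suminf) (use that f nonneg in auto)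
    finally show ?thesis .
  qed
  have "(\<Sum>j=1..m. f (j - c)) = (\<Sum>j\<in>{j\<in>{1..m}. c < j}. f (j - c))"
    by (rule sum.mono_neutral_right) (auto simp: f0 not_less)
  also have "\<dots> \<le> suminf f" by (rule le) (auto simp: inj_on_def)
  finally show "(\<Sum>j=1..m. f (j - c)) \<le> suminf f" .
  have "(\<Sum>i=1..m. f (c - i)) = (\<Sum>i\<in>{i\<in>{1..m}. i < c}. f (c - i))"
    by (rule sum.mono_neutral_right) (auto simp: f0 not_less)
  also have "\<dots> \<le> suminf f" by (rule le) (auto simp: inj_on_def)
  finally show "(\<Sum>i=1..m. f (c - i)) \<le> suminf f" .
qed

definition far_series :: "real \<Rightarrow> real" where
  "far_series \<alpha> = (\<Sum>d. real d powr (- \<alpha> - 1))"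

lemma scaled_A_R_sums_le:
  assumes n: "1 \<le> n" and p: "2 \<le> p" and \<alpha>: "1 < \<alpha>" "\<alpha> < 2"
  defines "m \<equiv> n + p - 2" and "C \<equiv> real (2 * p + 1) * near_const \<alpha> p + far_const \<alpha> p * far_series \<alpha>"
  shows "i \<in> {1..m} \<Longrightarrow> (\<Sum>j=1..m. \<bar>real n powr (- \<alpha>) * A_R \<alpha> p n i j\<bar>) \<le> C"
    and "j \<in> {1..m} \<Longrightarrow> (\<Sum>i=1..m. \<bar>real n powr (- \<alpha>) * A_R \<alpha> p n i j\<bar>) \<le> C"
proof -
  define f where "f = (\<lambda>d::nat. real d powr (- \<alpha> - 1))"
  have f: "f 0 = 0" "\<And>d. 0 \<le> f d" "summable f"
    using \<alpha> by (simp_all add: f_def summable_real_powr_iff)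
  have "suminf f = far_series \<alpha>" by (simp add: f_def far_series_def)
  note sums = sum_diff_le_suminf[OF f, unfolded this]
  have near: "0 \<le> near_const \<alpha> p" and far: "0 \<le> far_const \<alpha> p"
    using near_const_nonneg[OF \<alpha>(2)] far_const_nonneg[OF \<alpha>] .
  let ?E = "\<lambda>i j. (if j \<le> i + p \<and> i \<le> j + p then near_const \<alpha> p else 0) + far_const \<alpha> p * f (j - i - p)"
  have entry: "\<bar>real n powr (- \<alpha>) * A_R \<alpha> p n i j\<bar> \<le> ?E i j" if "i \<in> {1..m}" "j \<in> {1..m}" for i j
    using abs_scaled_A_R_le[OF n p \<alpha>, of i j] that by (simp add: f_def m_def)
  show "(\<Sum>j=1..m. \<bar>real n powr (- \<alpha>) * A_R \<alpha> p n i j\<bar>) \<le> C" if "i \<in> {1..m}"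
  proof -
    have "(\<Sum>j=1..m. \<bar>real n powr (- \<alpha>) * A_R \<alpha> p n i j\<bar>) \<le> (\<Sum>j=1..m. ?E i j)"
      by (rule sum_mono) (use entry that in auto)
    also have "\<dots> = (\<Sum>j=1..m. if i \<le> j + p \<and> j \<le> i + p then near_const \<alpha> p else 0)
        + far_const \<alpha> p * (\<Sum>j=1..m. f (j - (i + p)))"
      by (simp add: sum.distrib sum_distrib_left conj_commute)
    also have "\<dots> \<le> C"
      unfolding C_def by (intro add_mono sum_band_le near mult_left_mono sums far)
    finally show ?thesis .
  qed
  show "(\<Sum>i=1..m. \<bar>real n powr (- \<alpha>) * A_R \<alpha> p n i j\<bar>) \<le> C" if "j \<in> {1..m}"
  proof -
    have "(\<Sum>i=1..m. \<bar>real n powr (- \<alpha>) * A_R \<alpha> p n i j\<bar>) \<le> (\<Sum>i=1..m. ?E i j)"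
      by (rule sum_mono) (use entry that in auto)
    also have "\<dots> = (\<Sum>i=1..m. if j \<le> i + p \<and> i \<le> j + p then near_const \<alpha> p else 0)
        + far_const \<alpha> p * (\<Sum>i=1..m. f (j - p - i))"
      by (simp add: sum.distrib sum_distrib_left ac_simps)
    also have "\<dots> \<le> C"
      unfolding C_def by (intro add_mono sum_band_le near mult_left_mono sums far)
    finally show ?thesis .
  qed
qed

theorem lemma6p3:
  fixes \<alpha> :: real and p :: nat
  assumes "1 < \<alpha>" and "\<alpha> < 2" and "2 \<le> p"
  shows "\<exists>C. \<forall>n\<ge>1.
           mat_norm_1 (n + p - 2) (\<lambda>i j. real n powr (- \<alpha>) * A_R \<alpha> p n i j) \<le> C \<and>
           mat_norm_2 (n + p - 2) (\<lambda>i j. real n powr (- \<alpha>) * A_R \<alpha> p n i j) \<le> C \<and>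
           mat_norm_inf (n + p - 2) (\<lambda>i j. real n powr (- \<alpha>) * A_R \<alpha> p n i j) \<le> C"
proof (intro exI allI impI)
  fix n :: nat assume n: "1 \<le> n"
  have m: "1 \<le> n + p - 2" using n assms(3) by simp
  note sums = scaled_A_R_sums_le[OF n assms(3,1,2)]
  show "mat_norm_1 (n + p - 2) (\<lambda>i j. real n powr (- \<alpha>) * A_R \<alpha> p n i j) \<le>
          real (2 * p + 1) * near_const \<alpha> p + far_const \<alpha> p * far_series \<alpha> \<and>
        mat_norm_2 (n + p - 2) (\<lambda>i j. real n powr (- \<alpha>) * A_R \<alpha> p n i j) \<le>
          real (2 * p + 1) * near_const \<alpha> p + far_const \<alpha> p * far_series \<alpha> \<and>
        mat_norm_inf (n + p - 2) (\<lambda>i j. real n powr (- \<alpha>) * A_R \<alpha> p n i j) \<le>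
          real (2 * p + 1) * near_const \<alpha> p + far_const \<alpha> p * far_series \<alpha>"
    using mat_norm_1_le[where M = "\<lambda>i j. real n powr (- \<alpha>) * A_R \<alpha> p n i j", OF m sums(2)]
      mat_norm_2_le[where M = "\<lambda>i j. real n powr (- \<alpha>) * A_R \<alpha> p n i j", OF m sums]
      mat_norm_inf_le[where M = "\<lambda>i j. real n powr (- \<alpha>) * A_R \<alpha> p n i j", OF m sums(1)]
    by blast
qed

end
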